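(* The operator $\widetilde{R}$ is well-defined on circuits modulo $A$: for all circuits $c,d:a\to b$, if $c$ and $d$ are equal modulo $A$, then $\widetilde{R}[c]$ and $\widetilde{R}[d]$ are equal modulo $A$.
   Context: A circuit is a morphism of the free symmetric strict monoidal category whose objects are natural numbers (tensor = addition) generated by $\mathsf{discard}:1\to 0$, $\mathsf{copy}:1\to 2$, $\mathsf{zero}:0\to1$, $\mathsf{add}:2\to1$, $\mathsf{one}:0\to 1$, $\mathsf{and}:2\to 1$. Composition is diagrammatic ($f;g$ = first $f$ then $g$), $\sigma_{m,n}$ is the symmetry $m+n\to n+m$ ($\sigma=\sigma_{1,1}$), $\mathsf{copy}_n:n\to 2n$, $\mathsf{discard}_n:n\to0$ are the evident composites. $A$ is the set of equations: $\mathsf{copy};\sigma=\mathsf{copy}$; $\mathsf{copy};(\mathsf{copy}\otimes \mathrm{id}_1)=\mathsf{copy};(\mathrm{id}_1\otimes\mathsf{copy})$; $\mathsf{copy};(\mathsf{discard}\otimes\mathrm{id}_1)=\mathrm{id}_1$; for every circuit $f:a\to b$, $f;\mathsf{copy}_b=\mathsf{copy}_a;(f\otimes f)$ and $f;\mathsf{discard}_b=\mathsf{discard}_a$; commutativity, associativity and unit laws for $(\mathsf{add},\mathsf{zero})$ and for $(\mathsf{and},\mathsf{one})$; $\mathsf{copy};\mathsf{add}=\mathsf{discard};\mathsf{zero}$; and distributivity $(\mathrm{id}_1\otimes\mathsf{add});\mathsf{and}=(\mathsf{copy}\otimes\mathrm{id}_2);(\mathrm{id}_1\otimes\sigma\otimes\mathrm{id}_1);(\mathsf{and}\otimes\mathsf{and});\mathsf{add}$.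 "Equal modulo $A$" means related by the smallest congruence (w.r.t. composition and tensor, and including the symmetric monoidal laws) containing $A$. For each circuit $f:a\to b$ the circuit $\widetilde{R}[f]:a+b\to a$ is defined inductively (it is the syntactic reverse derivative, computing $(x,\delta)\mapsto J_f(x)^{T}\delta$): on generators, $\widetilde{R}[\mathsf{discard}]=\mathsf{discard};\mathsf{zero}$; $\widetilde{R}[\mathsf{copy}]=\mathsf{discard}\otimes\mathsf{add}$; $\widetilde{R}[\mathsf{zero}]=\mathsf{discard}$; $\widetilde{R}[\mathsf{one}]=\mathsf{discard}$; $\widetilde{R}[\mathsf{add}]=\mathsf{discard}\otimes\mathsf{discard}\otimes\mathsf{copy}$; $\widetilde{R}[\mathsf{and}]=(\sigma\otimes\mathsf{copy});(\mathrm{id}_1\otimes\sigma\otimes\mathrm{id}_1);(\mathsf{and}\otimes\mathsf{and})$ (i.e. $(x_1,x_2,\delta)\mapsto(x_2\delta,x_1\delta)$); on identities and symmetries, $\widetilde{R}[\mathrm{id}_n]=\mathsf{discard}_n\otimes\mathrm{id}_n$ and $\widetilde{R}[\sigma_{m,n}]=\mathsf{discard}_{m+n}\otimes\sigma_{n,m}$; for $f:a\to b$, $g:b\to c$, $\widetilde{R}[f;g]=(\mathsf{copy}_a\otimes\mathrm{id}_c);(\mathrm{id}_a\otimes f\otimes \mathrm{id}_c);(\mathrm{id}_a\otimes\widetilde{R}[g]);\widetilde{R}[f]$; for $f:a\to b$, $g:c\to d$, $\widetilde{R}[f\otimes g]=(\mathrm{id}_a\otimes\sigma_{c,b}\otimes\mathrm{id}_d);(\widetilde{R}[f]\otimes\widetilde{R}[g])$.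 *)

theory Defs
  imports Main
begin

datatype gen = Discard | Copy | Zero | Add | One | And

datatype circ =
    Gen gen
  | Id nat
  | Sym nat nat
  | Comp circ circ         (* diagrammatic: Comp f g = f ; g *)
  | Tens circ circ

fun gen_dom :: "gen \<Rightarrow> nat" where
  "gen_dom Discard = 1" | "gen_dom Copy = 1" | "gen_dom Zero = 0"
| "gen_dom Add = 2" | "gen_dom One = 0" | "gen_dom And = 2"

fun gen_cod :: "gen \<Rightarrow> nat" where
  "gen_cod Discard = 0" | "gen_cod Copy = 2" | "gen_cod Zero = 1"
| "gen_cod Add = 1" | "gen_cod One = 1" | "gen_cod And = 1"

inductive has_type :: "circ \<Rightarrow> nat \<Rightarrow> nat \<Rightarrow> bool" where
  ty_gen: "has_type (Gen g) (gen_dom g) (gen_cod g)"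
| ty_id: "has_type (Id n) n n"
| ty_sym: "has_type (Sym m n) (m + n) (n + m)"
| ty_comp: "has_type f a b \<Longrightarrow> has_type g b c \<Longrightarrow> has_type (Comp f g) a c"
| ty_tens: "has_type f a b \<Longrightarrow> has_type g c d \<Longrightarrow> has_type (Tens f g) (a + c) (b + d)"

fun dom :: "circ \<Rightarrow> nat" where
  "dom (Gen g) = gen_dom g"
| "dom (Id n) = n"
| "dom (Sym m n) = m + n"
| "dom (Comp f g) = dom f"
| "dom (Tens f g) = dom f + dom g"

fun cod :: "circ \<Rightarrow> nat" where
  "cod (Gen g) = gen_cod g"
| "cod (Id n) = n"
| "cod (Sym m n) = n + m"
| "cod (Comp f g) = cod g"
| "cod (Tens f g) = cod f + cod g"

abbreviation \<sigma> :: circ where "\<sigma> \<equiv> Sym 1 1"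

fun copy_n :: "nat \<Rightarrow> circ" where
  "copy_n 0 = Id 0"
| "copy_n (Suc n) = Comp (Tens (Gen Copy) (copy_n n)) (Tens (Tens (Id 1) (Sym 1 n)) (Id n))"

fun discard_n :: "nat \<Rightarrow> circ" where
  "discard_n 0 = Id 0"
| "discard_n (Suc n) = Tens (Gen Discard) (discard_n n)"

inductive eqA :: "nat \<Rightarrow> nat \<Rightarrow> circ \<Rightarrow> circ \<Rightarrow> bool" where
  refl: "has_type f a b \<Longrightarrow> eqA a b f f"
| sym: "eqA a b f g \<Longrightarrow> eqA a b g f"
| trans: "eqA a b f g \<Longrightarrow> eqA a b g h \<Longrightarrow> eqA a b f h"
| comp_cong: "eqA a b f f' \<Longrightarrow> eqA b c g g' \<Longrightarrow> eqA a c (Comp f g) (Comp f' g')"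
| tens_cong: "eqA a b f f' \<Longrightarrow> eqA c d g g' \<Longrightarrow> eqA (a + c) (b + d) (Tens f g) (Tens f' g')"
| id_left: "has_type f a b \<Longrightarrow> eqA a b (Comp (Id a) f) f"
| id_right: "has_type f a b \<Longrightarrow> eqA a b (Comp f (Id b)) f"
| comp_assoc: "has_type f a b \<Longrightarrow> has_type g b c \<Longrightarrow> has_type h c d \<Longrightarrow>
     eqA a d (Comp (Comp f g) h) (Comp f (Comp g h))"
| tens_assoc: "has_type f a b \<Longrightarrow> has_type g c d \<Longrightarrow> has_type h e p \<Longrightarrow>
     eqA (a + c + e) (b + d + p) (Tens (Tens f g) h) (Tens f (Tens g h))"
| tens_unit_left: "has_type f a b \<Longrightarrow> eqA a b (Tens (Id 0) f) f"
| tens_unit_right: "has_type f a b \<Longrightarrow> eqA a b (Tens f (Id 0)) f"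
| tens_id: "eqA (m + n) (m + n) (Tens (Id m) (Id n)) (Id (m + n))"
| interchange: "has_type f a b \<Longrightarrow> has_type g b c \<Longrightarrow> has_type h d e \<Longrightarrow> has_type k e p \<Longrightarrow>
     eqA (a + d) (c + p) (Comp (Tens f h) (Tens g k)) (Tens (Comp f g) (Comp h k))"
| sym_inv: "eqA (m + n) (m + n) (Comp (Sym m n) (Sym n m)) (Id (m + n))"
| sym_nat: "has_type f a b \<Longrightarrow> has_type g c d \<Longrightarrow>
     eqA (a + c) (d + b) (Comp (Sym a c) (Tens g f)) (Comp (Tens f g) (Sym b d))"
| sym_hex1: "eqA (m + n + p) (n + p + m) (Sym m (n + p))
     (Comp (Tens (Sym m n) (Id p)) (Tens (Id n) (Sym m p)))"
| sym_hex2: "eqA (m + n + p) (p + m + n) (Sym (m + n) p)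
     (Comp (Tens (Id m) (Sym n p)) (Tens (Sym m p) (Id n)))"
| sym_unit_right: "eqA m m (Sym m 0) (Id m)"
| sym_unit_left: "eqA n n (Sym 0 n) (Id n)"
| copy_comm: "eqA 1 2 (Comp (Gen Copy) \<sigma>) (Gen Copy)"
| copy_assoc: "eqA 1 3 (Comp (Gen Copy) (Tens (Gen Copy) (Id 1)))
                        (Comp (Gen Copy) (Tens (Id 1) (Gen Copy)))"
| copy_unit: "eqA 1 1 (Comp (Gen Copy) (Tens (Gen Discard) (Id 1))) (Id 1)"
| copy_nat: "has_type f a b \<Longrightarrow> eqA a (b + b) (Comp f (copy_n b)) (Comp (copy_n a) (Tens f f))"
| discard_nat: "has_type f a b \<Longrightarrow> eqA a 0 (Comp f (discard_n b)) (discard_n a)"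
| add_comm: "eqA 2 1 (Comp \<sigma> (Gen Add)) (Gen Add)"
| add_assoc: "eqA 3 1 (Comp (Tens (Gen Add) (Id 1)) (Gen Add)) (Comp (Tens (Id 1) (Gen Add)) (Gen Add))"
| add_unit_left: "eqA 1 1 (Comp (Tens (Gen Zero) (Id 1)) (Gen Add)) (Id 1)"
| add_unit_right: "eqA 1 1 (Comp (Tens (Id 1) (Gen Zero)) (Gen Add)) (Id 1)"
| and_comm: "eqA 2 1 (Comp \<sigma> (Gen And)) (Gen And)"
| and_assoc: "eqA 3 1 (Comp (Tens (Gen And) (Id 1)) (Gen And)) (Comp (Tens (Id 1) (Gen And)) (Gen And))"
| and_unit_left: "eqA 1 1 (Comp (Tens (Gen One) (Id 1)) (Gen And)) (Id 1)"
| and_unit_right: "eqA 1 1 (Comp (Tens (Id 1) (Gen One)) (Gen And)) (Id 1)"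
| copy_add: "eqA 1 1 (Comp (Gen Copy) (Gen Add)) (Comp (Gen Discard) (Gen Zero))"
| distrib: "eqA 3 1 (Comp (Tens (Id 1) (Gen Add)) (Gen And))
     (Comp (Comp (Comp (Tens (Gen Copy) (Id 2)) (Tens (Tens (Id 1) \<sigma>) (Id 1)))
                 (Tens (Gen And) (Gen And))) (Gen Add))"

fun Rgen :: "gen \<Rightarrow> circ" where
  "Rgen Discard = Comp (Gen Discard) (Gen Zero)"
| "Rgen Copy = Tens (Gen Discard) (Gen Add)"
| "Rgen Zero = Gen Discard"
| "Rgen One = Gen Discard"
| "Rgen Add = Tens (Tens (Gen Discard) (Gen Discard)) (Gen Copy)"
| "Rgen And = Comp (Comp (Tens \<sigma> (Gen Copy)) (Tens (Tens (Id 1) \<sigma>) (Id 1)))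
                   (Tens (Gen And) (Gen And))"

fun R :: "circ \<Rightarrow> circ" where
  "R (Gen g) = Rgen g"
| "R (Id n) = Tens (discard_n n) (Id n)"
| "R (Sym m n) = Tens (discard_n (m + n)) (Sym n m)"
| "R (Comp f g) =
     Comp (Comp (Comp (Tens (copy_n (dom f)) (Id (cod g)))
                      (Tens (Tens (Id (dom f)) f) (Id (cod g))))
                (Tens (Id (dom f)) (R g)))
          (R f)"
| "R (Tens f g) =
     Comp (Tens (Tens (Id (dom f)) (Sym (dom g) (cod f))) (Id (cod g)))
          (Tens (R f) (R g))"

end

theory Submission
  imports Defs
begin

(* Read a circuit a -> b as b polynomials in a variables over the two-element field F2.
   The equations of A are sound for this reading (copy ; add = discard ; zero is x + x = 0),
   and also complete: with copy and discard every circuit is A-equal to the tuple of circuits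
   built from its polynomials, and every polynomial identity over F2 is an instance of the
   equations of A.  The syntactic reverse derivative R[f] denotes (x, d) |-> J_f(x)^T d, where
   J_f is formed from the formal partial derivatives of the polynomials of f, so it depends on
   these polynomials only.  Hence if c and d are A-equal they have the same polynomials, so
   R[c] and R[d] have the same polynomials, and completeness makes them A-equal. *)

fun well_typed :: "circ \<Rightarrow> bool" where
  "well_typed (Gen g) = True"
| "well_typed (Id n) = True"
| "well_typed (Sym m n) = True"
| "well_typed (Comp f g) = (well_typed f \<and> well_typed g \<and> cod f = dom g)"
| "well_typed (Tens f g) = (well_typed f \<and> well_typed g)"

lemma has_type_iff: "has_type f a b \<longleftrightarrow> well_typed f \<and> dom f = a \<and> cod f = b"
proof
  assume "has_type f a b"
  then show "well_typed f \<and> dom f = a \<and> cod f = b"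
    by induction auto
next
  assume "well_typed f \<and> dom f = a \<and> cod f = b"
  then show "has_type f a b"
  proof (induction f arbitrary: a b)
    case (Tens f g)
    then show ?case
      using has_type.ty_tens by fastforce
  qed (auto intro: has_type.intros)
qed

lemma discard_n_simps [simp]:
  "well_typed (discard_n n)" "dom (discard_n n) = n" "cod (discard_n n) = 0"
  by (induction n) auto

lemma copy_n_simps [simp]:
  "well_typed (copy_n n)" "dom (copy_n n) = n" "cod (copy_n n) = n + n"
  by (induction n) auto

lemma eqA_has_type: "eqA a b f g \<Longrightarrow> has_type f a b \<and> has_type g a b"
  by (induction rule: eqA.induct) (auto simp: has_type_iff)

lemma eqA_well_typed:
  "eqA a b f g \<Longrightarrow>
     well_typed f \<and> well_typed g \<and> dom f = a \<and> cod f = b \<and> dom g = a \<and> cod g = b"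
  using eqA_has_type has_type_iff by blast

lemmas [trans] = eqA.trans

text \<open>The rules of eqA with the typing side conditions phrased through dom and cod and
  with the indices as equational premises, so that they apply by rule whatever form the
  indices take.\<close>

lemma eqA_reflI: "well_typed f \<Longrightarrow> a = dom f \<Longrightarrow> b = cod f \<Longrightarrow> eqA a b f f"
  by (rule eqA.refl) (simp add: has_type_iff)

lemma eqA_comp_cong1:
  "eqA a b f f' \<Longrightarrow> well_typed g \<Longrightarrow> dom g = b \<Longrightarrow> c = cod g \<Longrightarrow> eqA a c (Comp f g) (Comp f' g)"
  by (rule eqA.comp_cong) (auto intro: eqA_reflI)

lemma eqA_comp_cong2:
  "eqA b c g g' \<Longrightarrow> well_typed f \<Longrightarrow> cod f = b \<Longrightarrow> a = dom f \<Longrightarrow> eqA a c (Comp f g) (Comp f g')"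
  by (rule eqA.comp_cong) (auto intro: eqA_reflI)

lemma eqA_tens_congI:
  "eqA (dom f) (cod f) f f' \<Longrightarrow> eqA (dom g) (cod g) g g' \<Longrightarrow>
     a = dom f + dom g \<Longrightarrow> b = cod f + cod g \<Longrightarrow> eqA a b (Tens f g) (Tens f' g')"
  using eqA.tens_cong by auto

lemma eqA_tens_cong1:
  "eqA (dom f) (cod f) f f' \<Longrightarrow> well_typed g \<Longrightarrow>
     a = dom f + dom g \<Longrightarrow> b = cod f + cod g \<Longrightarrow> eqA a b (Tens f g) (Tens f' g)"
  by (rule eqA_tens_congI) (auto intro: eqA_reflI)

lemma eqA_tens_cong2:
  "eqA (dom g) (cod g) g g' \<Longrightarrow> well_typed f \<Longrightarrow>
     a = dom f + dom g \<Longrightarrow> b = cod f + cod g \<Longrightarrow> eqA a b (Tens f g) (Tens f g')"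
  by (rule eqA_tens_congI) (auto intro: eqA_reflI)

lemma eqA_id_leftI:
  "well_typed f \<Longrightarrow> n = dom f \<Longrightarrow> a = dom f \<Longrightarrow> b = cod f \<Longrightarrow> eqA a b (Comp (Id n) f) f"
  using eqA.id_left has_type_iff by auto

lemma eqA_id_rightI:
  "well_typed f \<Longrightarrow> n = cod f \<Longrightarrow> a = dom f \<Longrightarrow> b = cod f \<Longrightarrow> eqA a b (Comp f (Id n)) f"
  using eqA.id_right has_type_iff by auto

lemma eqA_comp_assocI:
  "well_typed f \<Longrightarrow> well_typed g \<Longrightarrow> well_typed h \<Longrightarrow> cod f = dom g \<Longrightarrow> cod g = dom h \<Longrightarrow>
     a = dom f \<Longrightarrow> b = cod h \<Longrightarrow> eqA a b (Comp (Comp f g) h) (Comp f (Comp g h))"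
  using eqA.comp_assoc[of f a "cod f" g "cod g" h b] has_type_iff by auto

lemma eqA_tens_assocI:
  "well_typed f \<Longrightarrow> well_typed g \<Longrightarrow> well_typed h \<Longrightarrow>
     a = dom f + dom g + dom h \<Longrightarrow> b = cod f + cod g + cod h \<Longrightarrow>
     eqA a b (Tens (Tens f g) h) (Tens f (Tens g h))"
  using eqA.tens_assoc[of f "dom f" "cod f" g "dom g" "cod g" h "dom h" "cod h"] has_type_iff
  by auto

lemma eqA_tens_unit_leftI:
  "well_typed f \<Longrightarrow> a = dom f \<Longrightarrow> b = cod f \<Longrightarrow> eqA a b (Tens (Id 0) f) f"
  using eqA.tens_unit_left has_type_iff by auto

lemma eqA_tens_unit_rightI:
  "well_typed f \<Longrightarrow> a = dom f \<Longrightarrow> b = cod f \<Longrightarrow> eqA a b (Tens f (Id 0)) f"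
  using eqA.tens_unit_right has_type_iff by auto

lemma eqA_interchangeI:
  "well_typed f \<Longrightarrow> well_typed g \<Longrightarrow> well_typed h \<Longrightarrow> well_typed k \<Longrightarrow>
     cod f = dom g \<Longrightarrow> cod h = dom k \<Longrightarrow> a = dom f + dom h \<Longrightarrow> b = cod g + cod k \<Longrightarrow>
     eqA a b (Comp (Tens f h) (Tens g k)) (Tens (Comp f g) (Comp h k))"
  using eqA.interchange[of f "dom f" "cod f" g "cod g" h "dom h" "cod h" k "cod k"] has_type_iff
  by auto

lemma eqA_sym_natI:
  "well_typed f \<Longrightarrow> well_typed g \<Longrightarrow> x = dom f \<Longrightarrow> y = dom g \<Longrightarrow> x' = cod f \<Longrightarrow> y' = cod g \<Longrightarrow>
     a = dom f + dom g \<Longrightarrow> b = cod g + cod f \<Longrightarrow>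
     eqA a b (Comp (Sym x y) (Tens g f)) (Comp (Tens f g) (Sym x' y'))"
  using eqA.sym_nat[of f "dom f" "cod f" g "dom g" "cod g"] has_type_iff by auto

lemma eqA_copy_natI:
  "well_typed f \<Longrightarrow> n = cod f \<Longrightarrow> m = dom f \<Longrightarrow> a = dom f \<Longrightarrow> b = cod f + cod f \<Longrightarrow>
     eqA a b (Comp f (copy_n n)) (Comp (copy_n m) (Tens f f))"
  using eqA.copy_nat has_type_iff by auto

lemma eqA_discard_natI:
  "well_typed f \<Longrightarrow> n = cod f \<Longrightarrow> a = dom f \<Longrightarrow> b = 0 \<Longrightarrow>
     eqA a b (Comp f (discard_n n)) (discard_n a)"
  using eqA.discard_nat has_type_iff by auto

lemma eqA_sym_unit_rightI: "a = m \<Longrightarrow> b = m \<Longrightarrow> eqA a b (Sym m 0) (Id m)"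
  using eqA.sym_unit_right by simp

lemma eqA_sym_unit_leftI: "a = m \<Longrightarrow> b = m \<Longrightarrow> eqA a b (Sym 0 m) (Id m)"
  using eqA.sym_unit_left by simp

lemma eqA_tens_idI: "k = m + n \<Longrightarrow> a = m + n \<Longrightarrow> b = m + n \<Longrightarrow> eqA a b (Tens (Id m) (Id n)) (Id k)"
  using eqA.tens_id by simp

text \<open>A mask is a tensor of identities and discards, up to composition. It is determined up to
  A-equality by its bit list, which records for every input wire whether it survives.\<close>

fun is_mask :: "circ \<Rightarrow> bool" where
  "is_mask (Gen g) = (g = Discard)"
| "is_mask (Id n) = True"
| "is_mask (Sym m n) = False"
| "is_mask (Comp f g) = (is_mask f \<and> is_mask g)"
| "is_mask (Tens f g) = (is_mask f \<and> is_mask g)"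

fun comp_bits :: "bool list \<Rightarrow> bool list \<Rightarrow> bool list" where
  "comp_bits [] ys = []"
| "comp_bits (False # xs) ys = False # comp_bits xs ys"
| "comp_bits (True # xs) [] = True # comp_bits xs []"
| "comp_bits (True # xs) (y # ys) = y # comp_bits xs ys"

fun mask_bits :: "circ \<Rightarrow> bool list" where
  "mask_bits (Gen g) = [False]"
| "mask_bits (Id n) = replicate n True"
| "mask_bits (Sym m n) = []"
| "mask_bits (Comp f g) = comp_bits (mask_bits f) (mask_bits g)"
| "mask_bits (Tens f g) = mask_bits f @ mask_bits g"

definition wire :: "bool \<Rightarrow> circ" where
  "wire b = (if b then Id 1 else Gen Discard)"

fun mask_of_bits :: "bool list \<Rightarrow> circ" where
  "mask_of_bits [] = Id 0"
| "mask_of_bits (b # bs) = Tens (wire b) (mask_of_bits bs)"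

lemma wire_simps [simp]:
  "well_typed (wire b)" "dom (wire b) = 1" "cod (wire b) = (if b then 1 else 0)"
  by (auto simp: wire_def)

lemma mask_of_bits_simps [simp]:
  "well_typed (mask_of_bits bs)" "dom (mask_of_bits bs) = length bs"
  "cod (mask_of_bits bs) = count_list bs True"
  by (induction bs) auto

lemma count_list_replicate [simp]: "count_list (replicate n x) x = n"
  by (induction n) auto

lemma length_comp_bits: "length (comp_bits xs ys) = length xs"
  by (induction xs ys rule: comp_bits.induct) auto

lemma count_comp_bits:
  "length ys = count_list xs True \<Longrightarrow> count_list (comp_bits xs ys) True = count_list ys True"
  by (induction xs ys rule: comp_bits.induct) auto

lemma mask_bits_dom_cod:
  "is_mask f \<Longrightarrow> well_typed f \<Longrightarrow>
     length (mask_bits f) = dom f \<and> count_list (mask_bits f) True = cod f"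
  by (induction f) (auto simp: length_comp_bits count_comp_bits)

lemma tens_mask_of_bits:
  "eqA (length xs + length ys) (count_list xs True + count_list ys True)
     (Tens (mask_of_bits xs) (mask_of_bits ys)) (mask_of_bits (xs @ ys))"
proof (induction xs)
  case Nil
  then show ?case
    by simp (rule eqA_tens_unit_leftI, simp_all)
next
  case (Cons x xs)
  have "eqA (length (x # xs) + length ys) (count_list (x # xs) True + count_list ys True)
      (Tens (mask_of_bits (x # xs)) (mask_of_bits ys))
      (Tens (wire x) (Tens (mask_of_bits xs) (mask_of_bits ys)))"
    unfolding mask_of_bits.simps by (rule eqA_tens_assocI) simp_all
  also have "eqA (length (x # xs) + length ys) (count_list (x # xs) True + count_list ys True)
      \<dots> (mask_of_bits ((x # xs) @ ys))"
    unfolding append_Cons mask_of_bits.simps by (rule eqA_tens_cong2) (use Cons in simp_all)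
  finally show ?case .
qed

lemma comp_mask_of_bits:
  "length ys = count_list xs True \<Longrightarrow>
     eqA (length xs) (count_list ys True)
       (Comp (mask_of_bits xs) (mask_of_bits ys)) (mask_of_bits (comp_bits xs ys))"
proof (induction xs ys rule: comp_bits.induct)
  case (1 ys)
  then show ?case
    by simp (rule eqA_id_leftI, simp_all)
next
  case (2 xs ys)
  have "eqA (length (False # xs)) (count_list ys True)
      (Comp (mask_of_bits (False # xs)) (mask_of_bits ys))
      (Comp (mask_of_bits (False # xs)) (Tens (Id 0) (mask_of_bits ys)))"
    by (rule eqA_comp_cong2, rule eqA.sym, rule eqA_tens_unit_leftI) (use 2 in simp_all)
  also have "eqA (length (False # xs)) (count_list ys True) \<dots>
      (Tens (Comp (wire False) (Id 0)) (Comp (mask_of_bits xs) (mask_of_bits ys)))"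
    unfolding mask_of_bits.simps by (rule eqA_interchangeI) (use 2 in simp_all)
  also have "eqA (length (False # xs)) (count_list ys True) \<dots>
      (mask_of_bits (comp_bits (False # xs) ys))"
    unfolding comp_bits.simps mask_of_bits.simps
    by (rule eqA_tens_congI, rule eqA_id_rightI) (use 2 in simp_all)
  finally show ?case .
next
  case (3 xs)
  then show ?case by simp
next
  case (4 xs y ys)
  have "eqA (length (True # xs)) (count_list (y # ys) True)
      (Comp (mask_of_bits (True # xs)) (mask_of_bits (y # ys)))
      (Tens (Comp (Id 1) (wire y)) (Comp (mask_of_bits xs) (mask_of_bits ys)))"
    unfolding mask_of_bits.simps wire_def if_True by (rule eqA_interchangeI) (use 4 in simp_all)
  also have "eqA (length (True # xs)) (count_list (y # ys) True) \<dots>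
      (mask_of_bits (comp_bits (True # xs) (y # ys)))"
    unfolding comp_bits.simps mask_of_bits.simps
    by (rule eqA_tens_congI, rule eqA_id_leftI) (use 4 in simp_all)
  finally show ?case .
qed

lemma id_eq_mask_of_bits: "eqA n n (Id n) (mask_of_bits (replicate n True))"
proof (induction n)
  case 0
  then show ?case by simp (rule eqA_reflI, simp_all)
next
  case (Suc n)
  have "eqA (Suc n) (Suc n) (Id (Suc n)) (Tens (Id 1) (Id n))"
    by (rule eqA.sym, rule eqA_tens_idI) simp_all
  also have "eqA (Suc n) (Suc n) \<dots> (mask_of_bits (replicate (Suc n) True))"
    by (simp add: wire_def) (rule eqA_tens_cong2, use Suc in simp_all)
  finally show ?case .
qed

lemma mask_eq_mask_of_bits:
  "is_mask f \<Longrightarrow> well_typed f \<Longrightarrow> eqA (dom f) (cod f) f (mask_of_bits (mask_bits f))"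
proof (induction f)
  case (Gen g)
  then show ?case
    by (simp add: wire_def) (rule eqA.sym, rule eqA_tens_unit_rightI, simp_all)
next
  case (Id n)
  then show ?case
    using id_eq_mask_of_bits by simp
next
  case (Comp f g)
  then have "length (mask_bits g) = count_list (mask_bits f) True"
    using mask_bits_dom_cod by simp
  moreover have "eqA (dom f) (cod g) (Comp f g)
      (Comp (mask_of_bits (mask_bits f)) (mask_of_bits (mask_bits g)))"
    using Comp by (intro eqA.comp_cong) simp_all
  ultimately show ?case
    using Comp comp_mask_of_bits[of "mask_bits g" "mask_bits f"] mask_bits_dom_cod
    by (auto intro: eqA.trans)
next
  case (Tens f g)
  then have "eqA (dom (Tens f g)) (cod (Tens f g)) (Tens f g)
      (Tens (mask_of_bits (mask_bits f)) (mask_of_bits (mask_bits g)))"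
    by simp (rule eqA_tens_congI, simp_all)
  then show ?case
    using Tens tens_mask_of_bits[of "mask_bits f" "mask_bits g"] mask_bits_dom_cod
    by (auto intro: eqA.trans)
qed simp

lemma eqA_masks:
  assumes "is_mask f" "is_mask g" "well_typed f" "well_typed g" "mask_bits f = mask_bits g"
    and "a = dom f" "b = cod f"
  shows "eqA a b f g"
proof -
  have "dom f = dom g" "cod f = cod g"
    using assms mask_bits_dom_cod by metis+
  then show ?thesis
    using assms mask_eq_mask_of_bits[of f] mask_eq_mask_of_bits[of g] by (metis eqA.sym eqA.trans)
qed

lemma discard_n_mask [simp]:
  "is_mask (discard_n n)" "mask_bits (discard_n n) = replicate n False"
  by (induction n) auto

section \<open>Cartesian structure\<close>

definition pair :: "nat \<Rightarrow> circ \<Rightarrow> circ \<Rightarrow> circ" where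
  "pair a f g = Comp (copy_n a) (Tens f g)"

definition proj :: "nat \<Rightarrow> nat \<Rightarrow> circ" where
  "proj a k = Tens (Tens (discard_n k) (Id 1)) (discard_n (a - Suc k))"

definition fst_proj :: "nat \<Rightarrow> nat \<Rightarrow> circ" where
  "fst_proj b c = Tens (Id b) (discard_n c)"

definition snd_proj :: "nat \<Rightarrow> nat \<Rightarrow> circ" where
  "snd_proj b c = Tens (discard_n b) (Id c)"

lemma pair_simps [simp]:
  "well_typed (pair a f g) = (well_typed f \<and> well_typed g \<and> dom f + dom g = a + a)"
  "dom (pair a f g) = a" "cod (pair a f g) = cod f + cod g"
  by (auto simp: pair_def)

lemma proj_simps [simp]:
  "well_typed (proj a k)" "k < a \<Longrightarrow> dom (proj a k) = a" "cod (proj a k) = 1" "is_mask (proj a k)"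
  "mask_bits (proj a k) = replicate k False @ True # replicate (a - Suc k) False"
  by (auto simp: proj_def)

lemma fst_proj_simps [simp]:
  "well_typed (fst_proj b c)" "dom (fst_proj b c) = b + c" "cod (fst_proj b c) = b"
  "is_mask (fst_proj b c)" "mask_bits (fst_proj b c) = replicate b True @ replicate c False"
  by (auto simp: fst_proj_def)

lemma snd_proj_simps [simp]:
  "well_typed (snd_proj b c)" "dom (snd_proj b c) = b + c" "cod (snd_proj b c) = c"
  "is_mask (snd_proj b c)" "mask_bits (snd_proj b c) = replicate b False @ replicate c True"
  by (auto simp: snd_proj_def)

lemma comp_bits_replicate_False [simp]:
  "comp_bits (replicate n False @ xs) ys = replicate n False @ comp_bits xs ys"
  "comp_bits (replicate n False) ys = replicate n False"
  by (induction n) auto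

lemma comp_bits_replicate_True [simp]:
  "n \<le> length ys \<Longrightarrow> comp_bits (replicate n True @ xs) ys = take n ys @ comp_bits xs (drop n ys)"
proof (induction n arbitrary: ys)
  case (Suc n)
  then show ?case by (cases ys) auto
qed simp

lemma comp_bits_replicate_True_all [simp]: "n = length ys \<Longrightarrow> comp_bits (replicate n True) ys = ys"
  using comp_bits_replicate_True[of n ys "[]"] by simp

lemma comp_bits_Nil2 [simp]: "comp_bits xs [] = xs"
  by (induction xs "[] :: bool list" rule: comp_bits.induct) auto

lemma replicate_append_replicate [simp]:
  "replicate m x @ replicate n x = replicate (m + n) x"
  "replicate m x @ replicate n x @ ys = replicate (m + n) x @ ys"
  by (simp_all add: replicate_add)

lemma eqA_comp_reassocI:
  assumes "eqA b c h (Comp p q)" "well_typed f" "cod f = b" "a = dom f"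
  shows "eqA a c (Comp f h) (Comp (Comp f p) q)"
proof -
  have "well_typed p" "well_typed q" "dom p = b" "cod p = dom q" "cod q = c"
    using eqA_well_typed[OF assms(1)] by auto
  then show ?thesis
    using assms by (intro eqA.trans[OF eqA_comp_cong2 eqA.sym[OF eqA_comp_assocI]]) simp_all
qed

lemma copy_discard_right: "eqA 1 1 (Comp (Gen Copy) (Tens (Id 1) (Gen Discard))) (Id 1)"
proof -
  have "eqA 1 1 (Comp (Gen Copy) (Tens (Id 1) (Gen Discard)))
      (Comp (Comp (Gen Copy) \<sigma>) (Tens (Id 1) (Gen Discard)))"
    by (rule eqA_comp_cong1, rule eqA.sym, rule eqA.copy_comm) simp_all
  also have "eqA 1 1 \<dots> (Comp (Gen Copy) (Comp \<sigma> (Tens (Id 1) (Gen Discard))))"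
    by (rule eqA_comp_assocI) simp_all
  also have "eqA 1 1 \<dots> (Comp (Gen Copy) (Comp (Tens (Gen Discard) (Id 1)) (Sym 0 1)))"
    by (rule eqA_comp_cong2, rule eqA_sym_natI) simp_all
  also have "eqA 1 1 \<dots> (Comp (Gen Copy) (Tens (Gen Discard) (Id 1)))"
    by (rule eqA_comp_cong2, rule eqA.trans, rule eqA_comp_cong2, rule eqA_sym_unit_leftI,
        simp_all, rule eqA_id_rightI) simp_all
  also have "eqA 1 1 \<dots> (Id 1)"
    by (rule eqA.copy_unit)
  finally show ?thesis .
qed

lemma sym_comp_tens:
  assumes "well_typed f" "well_typed g" "cod f = 0 \<or> cod g = 0"
  shows "eqA (dom f + dom g) (cod f + cod g) (Comp (Sym (dom f) (dom g)) (Tens g f)) (Tens f g)"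
proof -
  have "eqA (dom f + dom g) (cod f + cod g) (Comp (Sym (dom f) (dom g)) (Tens g f))
      (Comp (Tens f g) (Sym (cod f) (cod g)))"
    by (rule eqA_sym_natI) (use assms in auto)
  also have "eqA (dom f + dom g) (cod f + cod g) \<dots> (Comp (Tens f g) (Id (cod f + cod g)))"
  proof (rule eqA_comp_cong2)
    show "eqA (cod f + cod g) (cod f + cod g) (Sym (cod f) (cod g)) (Id (cod f + cod g))"
      using assms(3) by (auto intro: eqA_sym_unit_rightI eqA_sym_unit_leftI)
  qed (use assms in simp_all)
  also have "eqA (dom f + dom g) (cod f + cod g) \<dots> (Tens f g)"
    by (rule eqA_id_rightI) (use assms in simp_all)
  finally show ?thesis .
qed

text \<open>copy_n (Suc n) is copy \<otimes> copy_n n followed by a shuffle of the middle wires; once the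
  consumer has absorbed the shuffle (premises swap and blocks), the copies of the first wire
  and of the other n wires are consumed separately.\<close>

lemma copy_Suc_comp:
  assumes X: "well_typed X" "dom X = 1" and Y: "well_typed Y" "dom Y = n + 1"
    and Z: "well_typed Z" "dom Z = n"
    and swap: "eqA (1 + n) (cod Y) (Comp (Sym 1 n) Y) Y'"
    and blocks: "eqA (Suc n + Suc n) (cod X + cod Y + cod Z)
      (Tens (Tens (Comp (Id 1) X) Y') (Comp (Id n) Z)) (Tens A B)"
    and A: "well_typed A" "dom A = 2" and B: "well_typed B" "dom B = n + n"
    and copy_A: "eqA 1 (cod A) (Comp (Gen Copy) A) A'"
    and copy_B: "eqA n (cod B) (Comp (copy_n n) B) B'"
  shows "eqA (Suc n) (cod X + cod Y + cod Z) (Comp (copy_n (Suc n)) (Tens (Tens X Y) Z)) (Tens A' B')"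
proof -
  let ?sh = "Tens (Tens (Id 1) (Sym 1 n)) (Id n)" and ?c = "cod X + cod Y + cod Z"
  have Y': "well_typed Y'" "dom Y' = 1 + n" "cod Y' = cod Y"
    using eqA_well_typed[OF swap] by auto
  have cod_AB: "cod A + cod B = ?c"
    using eqA_well_typed[OF blocks] by simp
  have "eqA (Suc n) ?c (Comp (copy_n (Suc n)) (Tens (Tens X Y) Z))
      (Comp (Tens (Gen Copy) (copy_n n)) (Comp ?sh (Tens (Tens X Y) Z)))"
    by simp (rule eqA_comp_assocI, use X Y Z in simp_all)
  also have "eqA (Suc n) ?c \<dots> (Comp (Tens (Gen Copy) (copy_n n))
      (Tens (Comp (Tens (Id 1) (Sym 1 n)) (Tens X Y)) (Comp (Id n) Z)))"
    by (rule eqA_comp_cong2, rule eqA_interchangeI) (use X Y Z in simp_all)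
  also have "eqA (Suc n) ?c \<dots> (Comp (Tens (Gen Copy) (copy_n n))
      (Tens (Tens (Comp (Id 1) X) (Comp (Sym 1 n) Y)) (Comp (Id n) Z)))"
    by (rule eqA_comp_cong2, rule eqA_tens_cong1, rule eqA_interchangeI) (use X Y Z in simp_all)
  also have "eqA (Suc n) ?c \<dots> (Comp (Tens (Gen Copy) (copy_n n))
      (Tens (Tens (Comp (Id 1) X) Y') (Comp (Id n) Z)))"
    by (rule eqA_comp_cong2, rule eqA_tens_cong1, rule eqA_tens_cong2) (use X Y Z swap in simp_all)
  also have "eqA (Suc n) ?c \<dots> (Comp (Tens (Gen Copy) (copy_n n)) (Tens A B))"
    by (rule eqA_comp_cong2) (use blocks X Y Z Y' in simp_all)
  also have "eqA (Suc n) ?c \<dots> (Tens (Comp (Gen Copy) A) (Comp (copy_n n) B))"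
    by (rule eqA_interchangeI) (use A B cod_AB in simp_all)
  also have "eqA (Suc n) ?c \<dots> (Tens A' B')"
    by (rule eqA_tens_congI)
      (use copy_A copy_B cod_AB eqA_well_typed[OF copy_A] eqA_well_typed[OF copy_B] in simp_all)
  finally show ?thesis .
qed

lemma copy_discard_fst: "eqA n n (Comp (copy_n n) (Tens (discard_n n) (Id n))) (Id n)"
proof (induction n)
  case 0
  then show ?case by (rule eqA_masks) simp_all
next
  case (Suc n)
  let ?X = "Gen Discard" and ?Y = "Tens (discard_n n) (Id 1)" and ?Z = "Id n"
  have "eqA (Suc n) (Suc n) (Comp (copy_n (Suc n)) (Tens (discard_n (Suc n)) (Id (Suc n))))
      (Comp (copy_n (Suc n)) (Tens (Tens ?X ?Y) ?Z))"
    by (rule eqA_comp_cong2, rule eqA_masks) simp_all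
  also have "eqA (Suc n) (Suc n) \<dots> (Tens (Id 1) (Id n))"
    using copy_Suc_comp[of ?X ?Y n ?Z "Tens (Id 1) (discard_n n)"
        "Tens (Gen Discard) (Id 1)" "Tens (discard_n n) (Id n)" "Id 1" "Id n"]
      sym_comp_tens[of "Id 1" "discard_n n"] eqA_masks eqA.copy_unit Suc
    by simp
  also have "eqA (Suc n) (Suc n) \<dots> (Id (Suc n))"
    by (rule eqA_tens_idI) simp_all
  finally show ?case .
qed

lemma pair_proj_eta: "eqA (Suc n) (Suc n) (pair (Suc n) (proj (Suc n) 0) (snd_proj 1 n)) (Id (Suc n))"
proof -
  let ?X = "Id 1" and ?Y = "Tens (discard_n n) (discard_n 1)" and ?Z = "Id n"
  have "eqA (Suc n) (Suc n) (pair (Suc n) (proj (Suc n) 0) (snd_proj 1 n))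
      (Comp (copy_n (Suc n)) (Tens (Tens ?X ?Y) ?Z))"
    unfolding pair_def by (rule eqA_comp_cong2, rule eqA_masks) simp_all
  also have "eqA (Suc n) (Suc n) \<dots> (Tens (Id 1) (Id n))"
    using copy_Suc_comp[of ?X ?Y n ?Z "Tens (discard_n 1) (discard_n n)"
        "Tens (Id 1) (Gen Discard)" "Tens (discard_n n) (Id n)" "Id 1" "Id n"]
      sym_comp_tens[of "discard_n 1" "discard_n n"] eqA_masks copy_discard_right copy_discard_fst
    by simp
  also have "eqA (Suc n) (Suc n) \<dots> (Id (Suc n))"
    by (rule eqA_tens_idI) simp_all
  finally show ?thesis .
qed

lemma comp_pair:
  assumes "well_typed h" "well_typed f" "well_typed g" "cod h = a" "dom f = a" "dom g = a"
    and "a' = dom h" "d = cod f + cod g"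
  shows "eqA a' d (Comp h (pair a f g)) (pair a' (Comp h f) (Comp h g))"
proof -
  have "eqA a' d (Comp h (pair a f g)) (Comp (Comp h (copy_n a)) (Tens f g))"
    unfolding pair_def by (rule eqA.sym, rule eqA_comp_assocI) (use assms in simp_all)
  also have "eqA a' d \<dots> (Comp (Comp (copy_n a') (Tens h h)) (Tens f g))"
    by (rule eqA_comp_cong1, rule eqA_copy_natI) (use assms in simp_all)
  also have "eqA a' d \<dots> (Comp (copy_n a') (Comp (Tens h h) (Tens f g)))"
    by (rule eqA_comp_assocI) (use assms in simp_all)
  also have "eqA a' d \<dots> (pair a' (Comp h f) (Comp h g))"
    unfolding pair_def by (rule eqA_comp_cong2, rule eqA_interchangeI) (use assms in simp_all)
  finally show ?thesis .
qed

lemma pair_cong: "eqA a b f f' \<Longrightarrow> eqA a c g g' \<Longrightarrow> d = b + c \<Longrightarrow> eqA a d (pair a f g) (pair a f' g')"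
  unfolding pair_def using eqA_well_typed[of a b f f'] eqA_well_typed[of a c g g']
  by (intro eqA_comp_cong2 eqA_tens_congI) simp_all

lemma proj_fst_proj: "k < b \<Longrightarrow> eqA (b + c) 1 (proj (b + c) k) (Comp (fst_proj b c) (proj b k))"
  by (rule eqA_masks) (simp_all add: min_def)

lemma proj_snd_proj: "k < c \<Longrightarrow> eqA (b + c) 1 (proj (b + c) (b + k)) (Comp (snd_proj b c) (proj c k))"
  by (rule eqA_masks) (simp_all add: min_def)

lemma pair_decomp:
  assumes "well_typed h" "dom h = a" "cod h = Suc b"
  shows "eqA a (Suc b) h (pair a (Comp h (proj (Suc b) 0)) (Comp h (snd_proj 1 b)))"
proof -
  have "eqA a (Suc b) h (Comp h (Id (Suc b)))"
    by (rule eqA.sym, rule eqA_id_rightI) (use assms in simp_all)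
  also have "eqA a (Suc b) \<dots> (Comp h (pair (Suc b) (proj (Suc b) 0) (snd_proj 1 b)))"
    by (rule eqA_comp_cong2, rule eqA.sym, rule pair_proj_eta) (use assms in simp_all)
  also have "eqA a (Suc b) \<dots> (pair a (Comp h (proj (Suc b) 0)) (Comp h (snd_proj 1 b)))"
    by (rule comp_pair) (use assms in simp_all)
  finally show ?thesis .
qed

lemma eqA_by_projections:
  assumes "well_typed f" "well_typed g" "dom f = a" "dom g = a" "cod f = b" "cod g = b"
    and "\<And>k. k < b \<Longrightarrow> eqA a 1 (Comp f (proj b k)) (Comp g (proj b k))"
  shows "eqA a b f g"
  using assms
proof (induction b arbitrary: f g)
  case 0
  have "eqA a 0 f (Comp f (discard_n 0))"
    by simp (rule eqA.sym, rule eqA_id_rightI, use 0 in simp_all)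
  also have "eqA a 0 \<dots> (discard_n a)"
    by (rule eqA_discard_natI) (use 0 in simp_all)
  also have "eqA a 0 \<dots> (Comp g (discard_n 0))"
    by (rule eqA.sym, rule eqA_discard_natI) (use 0 in simp_all)
  also have "eqA a 0 \<dots> g"
    by simp (rule eqA_id_rightI, use 0 in simp_all)
  finally show ?case .
next
  case (Suc b)
  have proj_Suc: "eqA (Suc b) 1 (proj (Suc b) (Suc k)) (Comp (snd_proj 1 b) (proj b k))"
    if "k < b" for k
    using proj_snd_proj[of k b 1] that by simp
  have "eqA a (Suc b) f (pair a (Comp f (proj (Suc b) 0)) (Comp f (snd_proj 1 b)))"
    by (rule pair_decomp) (use Suc in simp_all)
  also have "eqA a (Suc b) \<dots> (pair a (Comp g (proj (Suc b) 0)) (Comp g (snd_proj 1 b)))"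
  proof (rule pair_cong)
    show "eqA a b (Comp f (snd_proj 1 b)) (Comp g (snd_proj 1 b))"
    proof (rule Suc.IH)
      fix k
      assume k: "k < b"
      have "eqA a 1 (Comp (Comp f (snd_proj 1 b)) (proj b k)) (Comp f (proj (Suc b) (Suc k)))"
        by (rule eqA.sym, rule eqA_comp_reassocI[OF proj_Suc[OF k]]) (use Suc in simp_all)
      also have "eqA a 1 \<dots> (Comp g (proj (Suc b) (Suc k)))"
        using Suc.prems k by simp
      also have "eqA a 1 \<dots> (Comp (Comp g (snd_proj 1 b)) (proj b k))"
        by (rule eqA_comp_reassocI[OF proj_Suc[OF k]]) (use Suc in simp_all)
      finally show "eqA a 1 (Comp (Comp f (snd_proj 1 b)) (proj b k))
          (Comp (Comp g (snd_proj 1 b)) (proj b k))" .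
    qed (use Suc.prems in simp_all)
  qed (use Suc.prems in simp_all)
  also have "eqA a (Suc b) \<dots> g"
    by (rule eqA.sym, rule pair_decomp) (use Suc in simp_all)
  finally show ?case .
qed

lemma tens_comp_fst_proj:
  assumes "well_typed f" "well_typed g"
  shows "eqA (dom f + dom g) (cod f)
    (Comp (Tens f g) (fst_proj (cod f) (cod g))) (Comp (fst_proj (dom f) (dom g)) f)"
proof -
  have "eqA (dom f + dom g) (cod f) (Comp (Tens f g) (fst_proj (cod f) (cod g)))
      (Tens (Comp f (Id (cod f))) (Comp g (discard_n (cod g))))"
    unfolding fst_proj_def by (rule eqA_interchangeI) (use assms in simp_all)
  also have "eqA (dom f + dom g) (cod f) \<dots>
      (Tens (Comp (Id (dom f)) f) (Comp (discard_n (dom g)) (Id 0)))"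
  proof -
    have "eqA (dom f) (cod f) (Comp f (Id (cod f))) (Comp (Id (dom f)) f)"
      by (rule eqA.trans[OF eqA_id_rightI eqA.sym[OF eqA_id_leftI]]) (use assms in simp_all)
    moreover have "eqA (dom g) 0 (Comp g (discard_n (cod g))) (Comp (discard_n (dom g)) (Id 0))"
      by (rule eqA.trans[OF eqA_discard_natI eqA.sym[OF eqA_id_rightI]]) (use assms in simp_all)
    ultimately show ?thesis
      by (intro eqA_tens_congI) (use assms in simp_all)
  qed
  also have "eqA (dom f + dom g) (cod f) \<dots> (Comp (fst_proj (dom f) (dom g)) (Tens f (Id 0)))"
    unfolding fst_proj_def by (rule eqA.sym, rule eqA_interchangeI) (use assms in simp_all)
  also have "eqA (dom f + dom g) (cod f) \<dots> (Comp (fst_proj (dom f) (dom g)) f)"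
    by (rule eqA_comp_cong2, rule eqA_tens_unit_rightI) (use assms in simp_all)
  finally show ?thesis .
qed

lemma tens_comp_snd_proj:
  assumes "well_typed f" "well_typed g"
  shows "eqA (dom f + dom g) (cod g)
    (Comp (Tens f g) (snd_proj (cod f) (cod g))) (Comp (snd_proj (dom f) (dom g)) g)"
proof -
  have "eqA (dom f + dom g) (cod g) (Comp (Tens f g) (snd_proj (cod f) (cod g)))
      (Tens (Comp f (discard_n (cod f))) (Comp g (Id (cod g))))"
    unfolding snd_proj_def by (rule eqA_interchangeI) (use assms in simp_all)
  also have "eqA (dom f + dom g) (cod g) \<dots>
      (Tens (Comp (discard_n (dom f)) (Id 0)) (Comp (Id (dom g)) g))"
  proof -
    have "eqA (dom f) 0 (Comp f (discard_n (cod f))) (Comp (discard_n (dom f)) (Id 0))"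
      by (rule eqA.trans[OF eqA_discard_natI eqA.sym[OF eqA_id_rightI]]) (use assms in simp_all)
    moreover have "eqA (dom g) (cod g) (Comp g (Id (cod g))) (Comp (Id (dom g)) g)"
      by (rule eqA.trans[OF eqA_id_rightI eqA.sym[OF eqA_id_leftI]]) (use assms in simp_all)
    ultimately show ?thesis
      by (intro eqA_tens_congI) (use assms in simp_all)
  qed
  also have "eqA (dom f + dom g) (cod g) \<dots> (Comp (snd_proj (dom f) (dom g)) (Tens (Id 0) g))"
    unfolding snd_proj_def by (rule eqA.sym, rule eqA_interchangeI) (use assms in simp_all)
  also have "eqA (dom f + dom g) (cod g) \<dots> (Comp (snd_proj (dom f) (dom g)) g)"
    by (rule eqA_comp_cong2, rule eqA_tens_unit_leftI) (use assms in simp_all)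
  finally show ?thesis .
qed

datatype tm = V nat | Zr | On | Pl tm tm | Ml tm tm

fun csem :: "'a \<Rightarrow> 'a \<Rightarrow> ('a \<Rightarrow> 'a \<Rightarrow> 'a) \<Rightarrow> ('a \<Rightarrow> 'a \<Rightarrow> 'a) \<Rightarrow> circ \<Rightarrow> 'a list \<Rightarrow> 'a list"
  where
  "csem z u p q (Gen g) xs =
     (case g of
       Discard \<Rightarrow> []
     | Copy \<Rightarrow> [xs ! 0, xs ! 0]
     | Zero \<Rightarrow> [z]
     | Add \<Rightarrow> [p (xs ! 0) (xs ! 1)]
     | One \<Rightarrow> [u]
     | And \<Rightarrow> [q (xs ! 0) (xs ! 1)])"
| "csem z u p q (Id n) xs = xs"
| "csem z u p q (Sym m n) xs = drop m xs @ take m xs"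
| "csem z u p q (Comp f g) xs = csem z u p q g (csem z u p q f xs)"
| "csem z u p q (Tens f g) xs = csem z u p q f (take (dom f) xs) @ csem z u p q g (drop (dom f) xs)"

lemma length_csem [simp]:
  "well_typed f \<Longrightarrow> length xs = dom f \<Longrightarrow> length (csem z u p q f xs) = cod f"
  by (induction f arbitrary: xs) (auto split: gen.splits)

lemma csem_map_hom:
  assumes "h z = z'" "h u = u'"
    and "\<And>x y. h (p x y) = p' (h x) (h y)" "\<And>x y. h (q x y) = q' (h x) (h y)"
  shows "well_typed f \<Longrightarrow> length xs = dom f \<Longrightarrow>
    csem z' u' p' q' f (map h xs) = map h (csem z u p q f xs)"
proof (induction f arbitrary: xs)
  case (Gen g)
  then show ?case by (cases g) (auto simp: assms)
next
  case (Comp f g)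
  then show ?case by simp
qed (auto simp: take_map drop_map)

lemma csem_copy_n: "length xs = n \<Longrightarrow> csem z u p q (copy_n n) xs = xs @ xs"
proof (induction n arbitrary: xs)
  case (Suc n)
  then obtain x ys where "xs = x # ys" "length ys = n"
    by (cases xs) auto
  then show ?case
    using Suc.IH by simp
qed simp

lemma csem_discard_n: "length xs = n \<Longrightarrow> csem z u p q (discard_n n) xs = []"
  by (induction n arbitrary: xs) auto

lemma csem_pair:
  "well_typed f \<Longrightarrow> well_typed g \<Longrightarrow> dom f = a \<Longrightarrow> dom g = a \<Longrightarrow> length xs = a \<Longrightarrow>
     csem z u p q (pair a f g) xs = csem z u p q f xs @ csem z u p q g xs"
  by (simp add: pair_def csem_copy_n)

lemma csem_proj:
  assumes "k < a" "length xs = a"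
  shows "csem z u p q (proj a k) xs = [xs ! k]"
proof -
  have "drop k (take (Suc k) xs) = [xs ! k]"
    using assms by (simp add: take_Suc_conv_app_nth)
  then show ?thesis
    using assms by (simp add: proj_def csem_discard_n)
qed

abbreviation tsem :: "circ \<Rightarrow> tm list \<Rightarrow> tm list" where
  "tsem \<equiv> csem Zr On Pl Ml"

text \<open>Out-of-range variables are read as zero by substitution.\<close>

fun subst :: "tm list \<Rightarrow> tm \<Rightarrow> tm" where
  "subst H (V k) = (if k < length H then H ! k else Zr)"
| "subst H Zr = Zr"
| "subst H On = On"
| "subst H (Pl s t) = Pl (subst H s) (subst H t)"
| "subst H (Ml s t) = Ml (subst H s) (subst H t)"

definition var_block :: "nat \<Rightarrow> nat \<Rightarrow> tm list" where
  "var_block m n = map V [m..<m + n]"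

lemma var_block_simps [simp]:
  "length (var_block m n) = n" "k < n \<Longrightarrow> var_block m n ! k = V (m + k)"
  by (auto simp: var_block_def)

lemma var_block_append: "var_block 0 (a + c) = var_block 0 a @ var_block a c"
  using upt_add_eq_append[of 0 a c] by (simp add: var_block_def)

lemma subst_var_block: "map (subst H) (var_block 0 (length H)) = H"
  by (rule nth_equalityI) auto

lemma tsem_eq_subst:
  assumes "well_typed f" "length xs = dom f"
  shows "tsem f xs = map (subst xs) (tsem f (var_block 0 (dom f)))"
proof -
  have "map (subst xs) (tsem f (var_block 0 (dom f))) =
      tsem f (map (subst xs) (var_block 0 (dom f)))"
    by (rule csem_map_hom[symmetric]) (use assms in auto)
  then show ?thesis
    using subst_var_block[of xs] assms by simp
qed

lemma tsem_tens_var_block: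
  assumes "well_typed f" "well_typed g"
  shows "tsem (Tens f g) (var_block 0 (dom f + dom g)) =
    map (subst (var_block 0 (dom f))) (tsem f (var_block 0 (dom f))) @
    map (subst (var_block (dom f) (dom g))) (tsem g (var_block 0 (dom g)))"
  using assms tsem_eq_subst[of f "var_block 0 (dom f)"]
    tsem_eq_subst[of g "var_block (dom f) (dom g)"]
  by (simp add: var_block_append)

section \<open>Completeness\<close>

text \<open>As in subst, out-of-range variables are read as zero.\<close>

fun circ_of :: "nat \<Rightarrow> tm \<Rightarrow> circ" where
  "circ_of a (V k) = (if k < a then proj a k else Comp (discard_n a) (Gen Zero))"
| "circ_of a Zr = Comp (discard_n a) (Gen Zero)"
| "circ_of a On = Comp (discard_n a) (Gen One)"
| "circ_of a (Pl s t) = Comp (pair a (circ_of a s) (circ_of a t)) (Gen Add)"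
| "circ_of a (Ml s t) = Comp (pair a (circ_of a s) (circ_of a t)) (Gen And)"

lemma circ_of_simps [simp]:
  "well_typed (circ_of a t)" "dom (circ_of a t) = a" "cod (circ_of a t) = 1"
  by (induction t) auto

lemma tsem_circ_of: "tsem (circ_of a t) (var_block 0 a) = [subst (var_block 0 a) t]"
  by (induction t) (auto simp: csem_proj csem_pair csem_discard_n)

lemma comp_discard_n_comp:
  assumes "well_typed h" "cod h = b" "well_typed c" "dom c = 0"
  shows "eqA (dom h) (cod c) (Comp h (Comp (discard_n b) c)) (Comp (discard_n (dom h)) c)"
proof -
  have "eqA (dom h) (cod c) (Comp h (Comp (discard_n b) c)) (Comp (Comp h (discard_n b)) c)"
    by (rule eqA.sym, rule eqA_comp_assocI) (use assms in simp_all)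
  also have "eqA (dom h) (cod c) \<dots> (Comp (discard_n (dom h)) c)"
    by (rule eqA_comp_cong1, rule eqA_discard_natI) (use assms in simp_all)
  finally show ?thesis .
qed

lemma comp_pair_comp:
  assumes "well_typed h" "cod h = b" "well_typed f" "well_typed g" "dom f = b" "dom g = b"
    and "well_typed k" "dom k = cod f + cod g"
    and "eqA (dom h) (cod f) (Comp h f) f'" "eqA (dom h) (cod g) (Comp h g) g'"
  shows "eqA (dom h) (cod k) (Comp h (Comp (pair b f g) k)) (Comp (pair (dom h) f' g') k)"
proof -
  have "eqA (dom h) (cod k) (Comp h (Comp (pair b f g) k)) (Comp (Comp h (pair b f g)) k)"
    by (rule eqA.sym, rule eqA_comp_assocI) (use assms in simp_all)
  also have "eqA (dom h) (cod k) \<dots> (Comp (pair (dom h) (Comp h f) (Comp h g)) k)"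
    by (rule eqA_comp_cong1, rule comp_pair) (use assms in simp_all)
  also have "eqA (dom h) (cod k) \<dots> (Comp (pair (dom h) f' g') k)"
    by (rule eqA_comp_cong1, rule pair_cong) (use assms in simp_all)
  finally show ?thesis .
qed

lemma comp_circ_of_subst:
  assumes h: "well_typed h" "dom h = a" "cod h = b" and H: "length H = b"
    and comp_proj: "\<And>k. k < b \<Longrightarrow> eqA a 1 (Comp h (proj b k)) (circ_of a (H ! k))"
  shows "eqA a 1 (Comp h (circ_of b t)) (circ_of a (subst H t))"
proof (induction t)
  case (V k)
  then show ?case
    using comp_proj comp_discard_n_comp[of h b "Gen Zero"] h H by simp
next
  case Zr
  then show ?case
    using comp_discard_n_comp[of h b "Gen Zero"] h by simp
next
  case On
  then show ?case
    using comp_discard_n_comp[of h b "Gen One"] h by simp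
next
  case (Pl s t)
  then show ?case
    using comp_pair_comp[of h b "circ_of b s" "circ_of b t" "Gen Add"] h by simp
next
  case (Ml s t)
  then show ?case
    using comp_pair_comp[of h b "circ_of b s" "circ_of b t" "Gen And"] h by simp
qed

lemma fst_proj_comp_circ_of:
  "eqA (a + c) 1 (Comp (fst_proj a c) (circ_of a t)) (circ_of (a + c) (subst (var_block 0 a) t))"
proof (rule comp_circ_of_subst)
  fix k
  assume "k < a"
  then show "eqA (a + c) 1 (Comp (fst_proj a c) (proj a k)) (circ_of (a + c) (var_block 0 a ! k))"
    using eqA.sym[OF proj_fst_proj[of k a c]] by simp
qed simp_all

lemma snd_proj_comp_circ_of:
  "eqA (a + c) 1 (Comp (snd_proj a c) (circ_of c t)) (circ_of (a + c) (subst (var_block a c) t))"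
proof (rule comp_circ_of_subst)
  fix k
  assume "k < c"
  then show "eqA (a + c) 1 (Comp (snd_proj a c) (proj c k)) (circ_of (a + c) (var_block a c ! k))"
    using eqA.sym[OF proj_snd_proj[of k c a]] by simp
qed simp_all

lemma tens_comp_proj_fst:
  assumes f: "well_typed f" "k < cod f" and g: "well_typed g"
    and IH: "eqA (dom f) 1 (Comp f (proj (cod f) k)) (circ_of (dom f) t)"
  shows "eqA (dom f + dom g) 1 (Comp (Tens f g) (proj (cod f + cod g) k))
    (circ_of (dom f + dom g) (subst (var_block 0 (dom f)) t))"
proof -
  let ?a = "dom f" and ?b = "cod f" and ?c = "dom g" and ?d = "cod g"
  have "eqA (?a + ?c) 1 (Comp (Tens f g) (proj (?b + ?d) k))
      (Comp (Comp (Tens f g) (fst_proj ?b ?d)) (proj ?b k))"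
    by (rule eqA_comp_reassocI, rule proj_fst_proj) (use f g in simp_all)
  also have "eqA (?a + ?c) 1 \<dots> (Comp (Comp (fst_proj ?a ?c) f) (proj ?b k))"
    by (rule eqA_comp_cong1, rule tens_comp_fst_proj) (use f g in simp_all)
  also have "eqA (?a + ?c) 1 \<dots> (Comp (fst_proj ?a ?c) (Comp f (proj ?b k)))"
    by (rule eqA_comp_assocI) (use f in simp_all)
  also have "eqA (?a + ?c) 1 \<dots> (Comp (fst_proj ?a ?c) (circ_of ?a t))"
    by (rule eqA_comp_cong2) (use IH in simp_all)
  also have "eqA (?a + ?c) 1 \<dots> (circ_of (?a + ?c) (subst (var_block 0 ?a) t))"
    by (rule fst_proj_comp_circ_of)
  finally show ?thesis .
qed

lemma tens_comp_proj_snd: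
  assumes g: "well_typed g" "k < cod g" and f: "well_typed f"
    and IH: "eqA (dom g) 1 (Comp g (proj (cod g) k)) (circ_of (dom g) t)"
  shows "eqA (dom f + dom g) 1 (Comp (Tens f g) (proj (cod f + cod g) (cod f + k)))
    (circ_of (dom f + dom g) (subst (var_block (dom f) (dom g)) t))"
proof -
  let ?a = "dom f" and ?b = "cod f" and ?c = "dom g" and ?d = "cod g"
  have "eqA (?a + ?c) 1 (Comp (Tens f g) (proj (?b + ?d) (?b + k)))
      (Comp (Comp (Tens f g) (snd_proj ?b ?d)) (proj ?d k))"
    by (rule eqA_comp_reassocI, rule proj_snd_proj) (use f g in simp_all)
  also have "eqA (?a + ?c) 1 \<dots> (Comp (Comp (snd_proj ?a ?c) g) (proj ?d k))"
    by (rule eqA_comp_cong1, rule tens_comp_snd_proj) (use f g in simp_all)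
  also have "eqA (?a + ?c) 1 \<dots> (Comp (snd_proj ?a ?c) (Comp g (proj ?d k)))"
    by (rule eqA_comp_assocI) (use g in simp_all)
  also have "eqA (?a + ?c) 1 \<dots> (Comp (snd_proj ?a ?c) (circ_of ?c t))"
    by (rule eqA_comp_cong2) (use IH in simp_all)
  also have "eqA (?a + ?c) 1 \<dots> (circ_of (?a + ?c) (subst (var_block ?a ?c) t))"
    by (rule snd_proj_comp_circ_of)
  finally show ?thesis .
qed

lemma sym_comp_proj:
  assumes "k < n + m"
  shows "eqA (m + n) 1 (Comp (Sym m n) (proj (n + m) k))
    (proj (m + n) (if k < n then m + k else k - n))"
proof (cases "k < n")
  case True
  have "eqA (m + n) 1 (Comp (Sym m n) (proj (n + m) k))
      (Comp (Comp (Sym m n) (fst_proj n m)) (proj n k))"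
    by (rule eqA_comp_reassocI, rule proj_fst_proj) (use True in simp_all)
  also have "eqA (m + n) 1 \<dots> (Comp (snd_proj m n) (proj n k))"
    by (rule eqA_comp_cong1)
      (use True sym_comp_tens[of "discard_n m" "Id n"] in \<open>simp_all add: fst_proj_def snd_proj_def\<close>)
  also have "eqA (m + n) 1 \<dots> (proj (m + n) (m + k))"
    by (rule eqA.sym, rule proj_snd_proj) (use True in simp)
  finally show ?thesis
    using True by simp
next
  case False
  then obtain j where j: "k = n + j" "j < m"
    using assms by (metis add_less_cancel_left le_add_diff_inverse not_less)
  have "eqA (m + n) 1 (Comp (Sym m n) (proj (n + m) (n + j)))
      (Comp (Comp (Sym m n) (snd_proj n m)) (proj m j))"
    by (rule eqA_comp_reassocI, rule proj_snd_proj) (use j in simp_all)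
  also have "eqA (m + n) 1 \<dots> (Comp (fst_proj m n) (proj m j))"
    by (rule eqA_comp_cong1)
      (use j sym_comp_tens[of "Id m" "discard_n n"] in \<open>simp_all add: fst_proj_def snd_proj_def\<close>)
  also have "eqA (m + n) 1 \<dots> (proj (m + n) j)"
    by (rule eqA.sym, rule proj_fst_proj) (use j in simp)
  finally show ?thesis
    using j by simp
qed

lemma comp_proj_1_0:
  assumes "well_typed h" "cod h = 1"
  shows "eqA (dom h) 1 (Comp h (proj 1 0)) h"
proof -
  have "eqA (dom h) 1 (Comp h (proj 1 0)) (Comp h (Id 1))"
    by (rule eqA_comp_cong2, rule eqA_masks) (use assms in simp_all)
  also have "eqA (dom h) 1 \<dots> h"
    by (rule eqA_id_rightI) (use assms in simp_all)
  finally show ?thesis .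
qed

lemma binary_eqA_comp_pair_proj:
  assumes "well_typed h" "dom h = 2"
  shows "eqA 2 (cod h) h (Comp (pair 2 (proj 2 0) (proj 2 1)) h)"
proof -
  have "eqA 2 (cod h) h (Comp (Id 2) h)"
    by (rule eqA.sym, rule eqA_id_leftI) (use assms in simp_all)
  also have "eqA 2 (cod h) \<dots> (Comp (pair 2 (proj 2 0) (snd_proj 1 1)) h)"
    by (rule eqA_comp_cong1, rule eqA.sym)
      (use pair_proj_eta[of 1] assms in \<open>simp_all add: numeral_2_eq_2\<close>)
  also have "eqA 2 (cod h) \<dots> (Comp (pair 2 (proj 2 0) (proj 2 1)) h)"
    by (rule eqA_comp_cong1, rule pair_cong, rule eqA_reflI, simp_all, rule eqA_masks)
      (use assms in \<open>simp_all add: numeral_eq_Suc\<close>)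
  finally show ?thesis .
qed

lemma gen_comp_proj_eqA_circ_of:
  assumes "k < gen_cod g"
  shows "eqA (gen_dom g) 1 (Comp (Gen g) (proj (gen_cod g) k))
    (circ_of (gen_dom g) (tsem (Gen g) (var_block 0 (gen_dom g)) ! k))"
proof (cases g)
  case Copy
  have "eqA 1 1 (Comp (Gen Copy) (proj 2 k)) (proj 1 0)"
  proof -
    have "eqA 1 1 (Comp (Gen Copy) (proj 2 k))
        (Comp (Gen Copy) (if k = 0 then Tens (Id 1) (Gen Discard) else Tens (Gen Discard) (Id 1)))"
      by (rule eqA_comp_cong2, rule eqA_masks)
        (use assms Copy in \<open>auto simp: numeral_eq_Suc less_Suc_eq\<close>)
    also have "eqA 1 1 \<dots> (Id 1)"
      using copy_discard_right eqA.copy_unit by simp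
    also have "eqA 1 1 \<dots> (proj 1 0)"
      by (rule eqA_masks) simp_all
    finally show ?thesis .
  qed
  then show ?thesis
    using assms Copy by (auto simp: less_Suc_eq numeral_eq_Suc)
next
  case Zero
  have "eqA 0 1 (Comp (Gen Zero) (proj 1 0)) (Comp (Id 0) (Gen Zero))"
    using comp_proj_1_0[of "Gen Zero"] eqA_id_leftI[of "Gen Zero" 0 0 1]
    by (auto intro: eqA.trans[OF _ eqA.sym])
  then show ?thesis
    using assms Zero by simp
next
  case One
  have "eqA 0 1 (Comp (Gen One) (proj 1 0)) (Comp (Id 0) (Gen One))"
    using comp_proj_1_0[of "Gen One"] eqA_id_leftI[of "Gen One" 0 0 1]
    by (auto intro: eqA.trans[OF _ eqA.sym])
  then show ?thesis
    using assms One by simp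
next
  case Add
  have "eqA 2 1 (Comp (Gen Add) (proj 1 0)) (Comp (pair 2 (proj 2 0) (proj 2 1)) (Gen Add))"
    using comp_proj_1_0[of "Gen Add"] binary_eqA_comp_pair_proj[of "Gen Add"]
    by (auto intro: eqA.trans)
  then show ?thesis
    using assms Add by (simp add: numeral_eq_Suc)
next
  case And
  have "eqA 2 1 (Comp (Gen And) (proj 1 0)) (Comp (pair 2 (proj 2 0) (proj 2 1)) (Gen And))"
    using comp_proj_1_0[of "Gen And"] binary_eqA_comp_pair_proj[of "Gen And"]
    by (auto intro: eqA.trans)
  then show ?thesis
    using assms And by (simp add: numeral_eq_Suc)
qed (use assms in simp)

lemma comp_proj_eqA_circ_of:
  "well_typed f \<Longrightarrow> k < cod f \<Longrightarrow>
     eqA (dom f) 1 (Comp f (proj (cod f) k)) (circ_of (dom f) (tsem f (var_block 0 (dom f)) ! k))"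
proof (induction f arbitrary: k)
  case (Gen g)
  then show ?case
    using gen_comp_proj_eqA_circ_of by simp
next
  case (Id n)
  then show ?case
    by simp (rule eqA_id_leftI, simp_all)
next
  case (Sym m n)
  then show ?case
    using sym_comp_proj[of k n m] by (auto simp: var_block_def nth_append)
next
  case (Comp f g)
  let ?a = "dom f" and ?b = "cod f" and ?c = "cod g"
  let ?F = "tsem f (var_block 0 ?a)" and ?G = "tsem g (var_block 0 ?b)"
  have fg: "well_typed f" "well_typed g" "dom g = ?b" "k < ?c"
    using Comp.prems by auto
  have len_F: "length ?F = ?b"
    using fg by simp
  have "eqA ?a 1 (Comp (Comp f g) (proj ?c k)) (Comp f (Comp g (proj ?c k)))"
    by (rule eqA_comp_assocI) (use fg in simp_all)
  also have "eqA ?a 1 \<dots> (Comp f (circ_of ?b (?G ! k)))"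
    by (rule eqA_comp_cong2) (use Comp.IH(2)[of k] fg in simp_all)
  also have "eqA ?a 1 \<dots> (circ_of ?a (subst ?F (?G ! k)))"
    by (rule comp_circ_of_subst) (use fg len_F Comp.IH(1) in simp_all)
  also have "subst ?F (?G ! k) = tsem (Comp f g) (var_block 0 (dom (Comp f g))) ! k"
    using tsem_eq_subst[of g ?F] fg len_F by simp
  finally show ?case
    by simp
next
  case (Tens f g)
  let ?a = "dom f" and ?b = "cod f" and ?c = "dom g" and ?d = "cod g"
  have len: "length (tsem f (var_block 0 ?a)) = ?b" "length (tsem g (var_block 0 ?c)) = ?d"
    using Tens.prems by auto
  have sem_Tens: "tsem (Tens f g) (var_block 0 (dom (Tens f g))) =
      map (subst (var_block 0 ?a)) (tsem f (var_block 0 ?a)) @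
      map (subst (var_block ?a ?c)) (tsem g (var_block 0 ?c))"
    using tsem_tens_var_block[of f g] Tens.prems by (simp only: dom.simps well_typed.simps)
  show ?case
  proof (cases "k < ?b")
    case True
    then show ?thesis
      unfolding sem_Tens using tens_comp_proj_fst[OF _ True _ Tens.IH(1)] Tens.prems len
      by (simp add: nth_append)
  next
    case False
    then obtain j where j: "k = ?b + j" "j < ?d"
      using Tens.prems by (metis add_less_cancel_left cod.simps(5) le_add_diff_inverse not_less)
    then show ?thesis
      unfolding sem_Tens using tens_comp_proj_snd[OF _ j(2) _ Tens.IH(2)] Tens.prems len
      by (simp add: nth_append)
  qed
qed

lemma eqA_if_tsem_eq:
  assumes "well_typed f" "well_typed g" "dom f = a" "dom g = a" "cod f = b" "cod g = b"
    and "tsem f (var_block 0 a) = tsem g (var_block 0 a)"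
  shows "eqA a b f g"
proof (rule eqA_by_projections)
  fix k
  assume "k < b"
  then show "eqA a 1 (Comp f (proj b k)) (Comp g (proj b k))"
    using comp_proj_eqA_circ_of[of f k] comp_proj_eqA_circ_of[of g k] assms
    by (auto intro: eqA.trans[OF _ eqA.sym])
qed (use assms in simp_all)

inductive tm_eq :: "tm \<Rightarrow> tm \<Rightarrow> bool" where
  refl: "tm_eq t t"
| sym: "tm_eq s t \<Longrightarrow> tm_eq t s"
| trans: "tm_eq s t \<Longrightarrow> tm_eq t r \<Longrightarrow> tm_eq s r"
| plus_cong: "tm_eq s s' \<Longrightarrow> tm_eq t t' \<Longrightarrow> tm_eq (Pl s t) (Pl s' t')"
| times_cong: "tm_eq s s' \<Longrightarrow> tm_eq t t' \<Longrightarrow> tm_eq (Ml s t) (Ml s' t')"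
| plus_comm: "tm_eq (Pl x y) (Pl y x)"
| plus_assoc: "tm_eq (Pl (Pl x y) z) (Pl x (Pl y z))"
| plus_zero: "tm_eq (Pl Zr x) x"
| plus_self: "tm_eq (Pl x x) Zr"
| times_comm: "tm_eq (Ml x y) (Ml y x)"
| times_assoc: "tm_eq (Ml (Ml x y) z) (Ml x (Ml y z))"
| times_one: "tm_eq (Ml On x) x"
| distrib: "tm_eq (Ml x (Pl y z)) (Pl (Ml x y) (Ml x z))"

text \<open>Each ring axiom l = r is an equation lhs = rhs of A fed with the term circuits of its
  variables by some T; since circ_of l and T ; lhs have the same term semantics, they are
  A-equal.\<close>

lemma circ_of_eqA_by_instance:
  assumes lhs_rhs: "eqA n 1 lhs rhs" and T: "well_typed T" "dom T = a" "cod T = n"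
    and "tsem (circ_of a l) (var_block 0 a) = tsem (Comp T lhs) (var_block 0 a)"
    and "tsem (circ_of a r) (var_block 0 a) = tsem (Comp T rhs) (var_block 0 a)"
  shows "eqA a 1 (circ_of a l) (circ_of a r)"
proof -
  have lhs_typed: "well_typed lhs" "dom lhs = n" "cod lhs = 1"
    and rhs_typed: "well_typed rhs" "dom rhs = n" "cod rhs = 1"
    using eqA_well_typed[OF lhs_rhs] by auto
  have "eqA a 1 (circ_of a l) (Comp T lhs)"
    by (rule eqA_if_tsem_eq) (use assms lhs_typed in simp_all)
  also have "eqA a 1 \<dots> (Comp T rhs)"
    by (rule eqA_comp_cong2) (use T lhs_rhs in simp_all)
  also have "eqA a 1 \<dots> (circ_of a r)"
    by (rule eqA.sym, rule eqA_if_tsem_eq) (use assms rhs_typed in simp_all)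
  finally show ?thesis .
qed

lemma circ_of_tm_eq: "tm_eq s t \<Longrightarrow> eqA a 1 (circ_of a s) (circ_of a t)"
proof (induction rule: tm_eq.induct)
  case (refl t)
  then show ?case by (rule eqA_reflI) simp_all
next
  case (sym s t)
  show ?case using sym.IH by (rule eqA.sym)
next
  case (trans s t r)
  show ?case using trans.IH by (rule eqA.trans)
next
  case (plus_cong s s' t t')
  then show ?case by simp (rule eqA_comp_cong1, rule pair_cong, assumption+, simp_all)
next
  case (times_cong s s' t t')
  then show ?case by simp (rule eqA_comp_cong1, rule pair_cong, assumption+, simp_all)
next
  case (plus_comm x y)
  show ?case
    by (rule circ_of_eqA_by_instance[OF eqA.add_comm, where T = "pair a (circ_of a y) (circ_of a x)"])
      (simp_all add: csem_pair tsem_circ_of)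
next
  case (plus_assoc x y z)
  show ?case
    by (rule circ_of_eqA_by_instance[OF eqA.add_assoc,
          where T = "pair a (circ_of a x) (pair a (circ_of a y) (circ_of a z))"])
      (simp_all add: csem_pair tsem_circ_of)
next
  case (plus_zero x)
  show ?case
    by (rule circ_of_eqA_by_instance[OF eqA.add_unit_left, where T = "circ_of a x"])
      (simp_all add: csem_pair tsem_circ_of)
next
  case (plus_self x)
  show ?case
    by (rule circ_of_eqA_by_instance[OF eqA.copy_add, where T = "circ_of a x"])
      (simp_all add: csem_pair tsem_circ_of)
next
  case (times_comm x y)
  show ?case
    by (rule circ_of_eqA_by_instance[OF eqA.and_comm, where T = "pair a (circ_of a y) (circ_of a x)"])
      (simp_all add: csem_pair tsem_circ_of)
next
  case (times_assoc x y z)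
  show ?case
    by (rule circ_of_eqA_by_instance[OF eqA.and_assoc,
          where T = "pair a (circ_of a x) (pair a (circ_of a y) (circ_of a z))"])
      (simp_all add: csem_pair tsem_circ_of)
next
  case (times_one x)
  show ?case
    by (rule circ_of_eqA_by_instance[OF eqA.and_unit_left, where T = "circ_of a x"])
      (simp_all add: csem_pair tsem_circ_of)
next
  case (distrib x y z)
  show ?case
    by (rule circ_of_eqA_by_instance[OF eqA.distrib,
          where T = "pair a (circ_of a x) (pair a (circ_of a y) (circ_of a z))"])
      (simp_all add: csem_pair tsem_circ_of)
qed

lemma eqA_if_tm_eq_tsem:
  assumes "well_typed f" "well_typed g" "dom f = a" "dom g = a" "cod f = b" "cod g = b"
    and "\<And>k. k < b \<Longrightarrow> tm_eq (tsem f (var_block 0 a) ! k) (tsem g (var_block 0 a) ! k)"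
  shows "eqA a b f g"
proof (rule eqA_by_projections)
  fix k
  assume k: "k < b"
  have "eqA a 1 (Comp f (proj b k)) (circ_of a (tsem f (var_block 0 a) ! k))"
    using comp_proj_eqA_circ_of[of f k] assms k by simp
  also have "eqA a 1 \<dots> (circ_of a (tsem g (var_block 0 a) ! k))"
    using circ_of_tm_eq assms(7)[OF k] .
  also have "eqA a 1 \<dots> (Comp g (proj b k))"
    using comp_proj_eqA_circ_of[of g k] assms k by (simp add: eqA.sym)
  finally show "eqA a 1 (Comp f (proj b k)) (Comp g (proj b k))" .
qed (use assms in simp_all)

section \<open>Soundness\<close>

abbreviation rsem :: "circ \<Rightarrow> 'a :: {zero, one, plus, times} list \<Rightarrow> 'a list" where
  "rsem \<equiv> csem 0 1 (+) (*)"

lemma length_eq_add_conv: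
  "length zs = m + n \<longleftrightarrow> (\<exists>xs ys. zs = xs @ ys \<and> length xs = m \<and> length ys = n)"
proof
  assume "length zs = m + n"
  then show "\<exists>xs ys. zs = xs @ ys \<and> length xs = m \<and> length ys = n"
    by (intro exI[of _ "take m zs"] exI[of _ "drop m zs"]) simp
qed auto

lemma length_eq_add3_conv:
  "length xs = a + c + e \<longleftrightarrow>
     (\<exists>x1 x2 x3. xs = x1 @ x2 @ x3 \<and> length x1 = a \<and> length x2 = c \<and> length x3 = e)"
proof
  assume l: "length xs = a + c + e"
  show "\<exists>x1 x2 x3. xs = x1 @ x2 @ x3 \<and> length x1 = a \<and> length x2 = c \<and> length x3 = e"
  proof (intro exI conjI)
    show "xs = take a xs @ take c (drop a xs) @ drop c (drop a xs)"
      by (simp only: append_take_drop_id)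
  qed (use l in simp_all)
qed auto

lemma eqA_sound:
  fixes xs :: "'a :: comm_semiring_1 list"
  assumes char_2: "\<And>x :: 'a. x + x = 0"
  shows "eqA a b f g \<Longrightarrow> length xs = a \<Longrightarrow> rsem f xs = rsem g xs"
proof (induction arbitrary: xs rule: eqA.induct)
  case (comp_cong a b f f' c g g')
  then show ?case
    using eqA_well_typed[OF comp_cong.hyps(1)] by simp
next
  case (tens_cong a b f f' c d g g')
  then show ?case
    using eqA_well_typed[OF tens_cong.hyps(1)] by simp
next
  case (tens_assoc f a b g c d h e p)
  then show ?case
    by (auto simp: length_eq_add3_conv has_type_iff)
next
  case (sym_hex1 m n p)
  then show ?case
    by (auto simp: length_eq_add3_conv)
next
  case (sym_hex2 m n p)
  then show ?case
    by (auto simp: length_eq_add3_conv)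
next
  case (copy_nat f a b)
  then show ?case
    by (simp add: has_type_iff csem_copy_n)
next
  case (discard_nat f a b)
  then show ?case
    by (simp add: has_type_iff csem_discard_n)
qed (auto simp: has_type_iff length_Suc_conv numeral_eq_Suc algebra_simps char_2)

lemma tm_eq_equivp: "equivp tm_eq"
  by (rule equivpI) (auto simp: reflp_def symp_def transp_def intro: tm_eq.intros)

quotient_type f2poly = tm / tm_eq
  by (rule tm_eq_equivp)

fun const_coeff :: "tm \<Rightarrow> bool" where
  "const_coeff (V k) = False"
| "const_coeff Zr = False"
| "const_coeff On = True"
| "const_coeff (Pl s t) = (const_coeff s \<noteq> const_coeff t)"
| "const_coeff (Ml s t) = (const_coeff s \<and> const_coeff t)"

lemma const_coeff_tm_eq: "tm_eq s t \<Longrightarrow> const_coeff s = const_coeff t"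
  by (induction rule: tm_eq.induct) auto

instantiation f2poly :: comm_ring_1
begin

lift_definition zero_f2poly :: f2poly is Zr .
lift_definition one_f2poly :: f2poly is On .
lift_definition plus_f2poly :: "f2poly \<Rightarrow> f2poly \<Rightarrow> f2poly" is Pl by (rule tm_eq.plus_cong)
lift_definition times_f2poly :: "f2poly \<Rightarrow> f2poly \<Rightarrow> f2poly" is Ml by (rule tm_eq.times_cong)
lift_definition uminus_f2poly :: "f2poly \<Rightarrow> f2poly" is "\<lambda>x. x" .
lift_definition minus_f2poly :: "f2poly \<Rightarrow> f2poly \<Rightarrow> f2poly" is Pl by (rule tm_eq.plus_cong)

instance
proof
  fix a b c :: f2poly
  show "a * b * c = a * (b * c)" by transfer (rule tm_eq.times_assoc)
  show "a * b = b * a" by transfer (rule tm_eq.times_comm)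
  show "1 * a = a" by transfer (rule tm_eq.times_one)
  show "a + b + c = a + (b + c)" by transfer (rule tm_eq.plus_assoc)
  show "a + b = b + a" by transfer (rule tm_eq.plus_comm)
  show "0 + a = a" by transfer (rule tm_eq.plus_zero)
  show "- a + a = 0" by transfer (rule tm_eq.plus_self)
  show "a - b = a + - b" by transfer (rule tm_eq.refl)
  show "(a + b) * c = a * c + b * c" by transfer (meson tm_eq.intros)
  show "(0 :: f2poly) \<noteq> 1" by transfer (auto dest: const_coeff_tm_eq)
qed

end

lemma uminus_f2poly_eq [simp]: "- x = (x :: f2poly)"
  by transfer (rule tm_eq.refl)

lemma add_self_f2poly [simp]: "x + x = (0 :: f2poly)"
  using left_minus[of x] by simp

abbreviation poly_of :: "tm \<Rightarrow> f2poly" where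
  "poly_of \<equiv> abs_f2poly"

lemma poly_of_simps:
  "poly_of Zr = 0" "poly_of On = 1"
  "poly_of (Pl s t) = poly_of s + poly_of t" "poly_of (Ml s t) = poly_of s * poly_of t"
  by (simp_all add: zero_f2poly_def one_f2poly_def plus_f2poly.abs_eq times_f2poly.abs_eq)

lemma poly_of_eq_iff: "poly_of s = poly_of t \<longleftrightarrow> tm_eq s t"
  by (simp add: f2poly.abs_eq_iff)

lemma rsem_poly_of:
  "well_typed f \<Longrightarrow> length xs = dom f \<Longrightarrow> rsem f (map poly_of xs) = map poly_of (tsem f xs)"
  by (rule csem_map_hom) (simp_all add: poly_of_simps)

text \<open>The generic point: evaluating a circuit there gives the polynomials it computes.\<close>

lemma tm_eq_tsem_if_rsem_eq:
  assumes "well_typed f" "well_typed g" "dom f = a" "dom g = a" "cod f = b" "cod g = b" "k < b"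
    and "rsem f (map poly_of (var_block 0 a)) = rsem g (map poly_of (var_block 0 a))"
  shows "tm_eq (tsem f (var_block 0 a) ! k) (tsem g (var_block 0 a) ! k)"
proof -
  have "map poly_of (tsem f (var_block 0 a)) = map poly_of (tsem g (var_block 0 a))"
    using assms rsem_poly_of[of f] rsem_poly_of[of g] by simp
  then have "map poly_of (tsem f (var_block 0 a)) ! k = map poly_of (tsem g (var_block 0 a)) ! k"
    by (rule arg_cong)
  then show ?thesis
    using assms by (simp add: poly_of_eq_iff)
qed

theorem eqA_complete:
  assumes "has_type f a b" "has_type g a b"
    and "\<And>xs :: f2poly list. length xs = a \<Longrightarrow> rsem f xs = rsem g xs"
  shows "eqA a b f g"
proof (rule eqA_if_tm_eq_tsem)
  fix k
  assume "k < b"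
  then show "tm_eq (tsem f (var_block 0 a) ! k) (tsem g (var_block 0 a) ! k)"
    using assms by (intro tm_eq_tsem_if_rsem_eq) (simp_all add: has_type_iff)
qed (use assms in \<open>simp_all add: has_type_iff\<close>)

fun eval_tm :: "(nat \<Rightarrow> f2poly) \<Rightarrow> tm \<Rightarrow> f2poly" where
  "eval_tm \<rho> (V k) = \<rho> k"
| "eval_tm \<rho> Zr = 0"
| "eval_tm \<rho> On = 1"
| "eval_tm \<rho> (Pl s t) = eval_tm \<rho> s + eval_tm \<rho> t"
| "eval_tm \<rho> (Ml s t) = eval_tm \<rho> s * eval_tm \<rho> t"

lemma eval_tm_tm_eq: "tm_eq s t \<Longrightarrow> eval_tm \<rho> s = eval_tm \<rho> t"
  by (induction rule: tm_eq.induct) (auto simp: algebra_simps)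

fun pderiv_tm :: "nat \<Rightarrow> tm \<Rightarrow> tm" where
  "pderiv_tm i (V k) = (if k = i then On else Zr)"
| "pderiv_tm i Zr = Zr"
| "pderiv_tm i On = Zr"
| "pderiv_tm i (Pl s t) = Pl (pderiv_tm i s) (pderiv_tm i t)"
| "pderiv_tm i (Ml s t) = Pl (Ml (pderiv_tm i s) t) (Ml s (pderiv_tm i t))"

lemma eval_pderiv_tm_eq: "tm_eq s t \<Longrightarrow> eval_tm \<rho> (pderiv_tm i s) = eval_tm \<rho> (pderiv_tm i t)"
proof (induction rule: tm_eq.induct)
  case (times_cong s s' t t')
  then show ?case
    using eval_tm_tm_eq[OF times_cong.hyps(1)] eval_tm_tm_eq[OF times_cong.hyps(2)] by simp
qed (auto simp: algebra_simps)

text \<open>Variables beyond the length of the list are zero, matching subst.\<close>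

definition env :: "f2poly list \<Rightarrow> nat \<Rightarrow> f2poly" where
  "env xs k = (if k < length xs then xs ! k else 0)"

lemma eval_tm_subst: "eval_tm \<rho> (subst H t) = eval_tm (env (map (eval_tm \<rho>) H)) t"
  by (induction t) (auto simp: env_def)

lemma sum_indicator_mult:
  fixes f :: "nat \<Rightarrow> 'a :: semiring_1"
  assumes "i < n"
  shows "(\<Sum>j<n. (if j = i then 1 else 0) * f j) = f i"
    and "(\<Sum>j<n. (if i = j then 1 else 0) * f j) = f i"
proof -
  have "(\<Sum>j<n. (if j = i then 1 else 0) * f j) = (\<Sum>j<n. if j = i then f j else 0)"
    by (rule sum.cong) auto
  then show "(\<Sum>j<n. (if j = i then 1 else 0) * f j) = f i"
    using assms by simp
  then show "(\<Sum>j<n. (if i = j then 1 else 0) * f j) = f i"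
    by (simp add: eq_commute)
qed

lemma eval_pderiv_tm_V: "eval_tm \<rho> (pderiv_tm i (V k)) = (if k = i then 1 else 0)"
  by simp

lemma eval_pderiv_subst:
  "eval_tm \<rho> (pderiv_tm i (subst H t)) =
     (\<Sum>k<length H.
        eval_tm (env (map (eval_tm \<rho>) H)) (pderiv_tm k t) * eval_tm \<rho> (pderiv_tm i (H ! k)))"
proof (induction t)
  case (V k)
  show ?case
  proof (cases "k < length H")
    case True
    then show ?thesis
      by (simp add: sum_indicator_mult eval_pderiv_tm_V del: pderiv_tm.simps(1))
  qed simp
next
  case (Pl s t)
  then show ?case
    by (simp add: sum.distrib algebra_simps)
next
  case (Ml s t)
  then show ?case
    by (simp add: sum.distrib algebra_simps sum_distrib_left sum_distrib_right eval_tm_subst)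
qed simp_all

lemma eval_pderiv_subst_var_block:
  "eval_tm \<rho> (pderiv_tm i (subst (var_block m n) t)) =
     (if m \<le> i \<and> i < m + n then eval_tm (env (map \<rho> [m..<m + n])) (pderiv_tm (i - m) t) else 0)"
proof -
  have vars: "map (eval_tm \<rho>) (var_block m n) = map \<rho> [m..<m + n]"
    by (simp add: var_block_def)
  have "eval_tm \<rho> (pderiv_tm i (subst (var_block m n) t)) =
      (\<Sum>k<n. eval_tm (env (map \<rho> [m..<m + n])) (pderiv_tm k t) * (if m + k = i then 1 else 0))"
    by (simp add: eval_pderiv_subst vars del: pderiv_tm.simps(1) add: eval_pderiv_tm_V)
  also have "\<dots> =
      (if m \<le> i \<and> i < m + n then eval_tm (env (map \<rho> [m..<m + n])) (pderiv_tm (i - m) t) else 0)"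
  proof (cases "m \<le> i \<and> i < m + n")
    case True
    let ?E = "\<lambda>k. eval_tm (env (map \<rho> [m..<m + n])) (pderiv_tm k t)"
    have "(\<Sum>k<n. ?E k * (if m + k = i then 1 else 0)) = (\<Sum>k<n. (if k = i - m then 1 else 0) * ?E k)"
      by (rule sum.cong) (use True in auto)
    also have "\<dots> = ?E (i - m)"
      by (rule sum_indicator_mult) (use True in linarith)
    finally show ?thesis
      using True by simp
  qed auto
  finally show ?thesis .
qed

lemma env_append:
  "env (map (env (xs @ ys)) [0..<length xs]) = env xs"
  "env (map (env (xs @ ys)) [length xs..<length xs + length ys]) = env ys"
  by (auto simp: env_def nth_append)

lemma sum_lessThan_add:
  fixes f :: "nat \<Rightarrow> 'a :: comm_monoid_add"
  shows "(\<Sum>j<m + n. f j) = (\<Sum>j<m. f j) + (\<Sum>j<n. f (m + j))"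
  by (induction n) (simp_all add: add.assoc)

section \<open>The reverse derivative computes the transposed Jacobian\<close>

text \<open>rev_jac f xs ds is the paper's J_f(xs)^T ds, for the Jacobian of the polynomials
  computed by f.\<close>

definition rev_jac :: "circ \<Rightarrow> f2poly list \<Rightarrow> f2poly list \<Rightarrow> f2poly list" where
  "rev_jac f xs ds =
     map (\<lambda>i. \<Sum>j<cod f. eval_tm (env xs) (pderiv_tm i (tsem f (var_block 0 (dom f)) ! j)) * ds ! j)
       [0..<dom f]"

lemma length_rev_jac [simp]: "length (rev_jac f xs ds) = dom f"
  by (simp add: rev_jac_def)

lemma nth_rev_jac:
  "i < dom f \<Longrightarrow>
     rev_jac f xs ds ! i =
       (\<Sum>j<cod f. eval_tm (env xs) (pderiv_tm i (tsem f (var_block 0 (dom f)) ! j)) * ds ! j)"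
  by (simp add: rev_jac_def)

lemma rsem_eq_eval_tsem:
  assumes "well_typed f" "length xs = dom f"
  shows "rsem f xs = map (eval_tm (env xs)) (tsem f (var_block 0 (dom f)))"
proof -
  have "map (eval_tm (env xs)) (var_block 0 (dom f)) = xs"
    using assms by (intro nth_equalityI) (auto simp: env_def)
  moreover have "rsem f (map (eval_tm (env xs)) (var_block 0 (dom f))) =
      map (eval_tm (env xs)) (tsem f (var_block 0 (dom f)))"
    by (rule csem_map_hom) (use assms in simp_all)
  ultimately show ?thesis
    by simp
qed

lemma rev_jac_id: "length ds = n \<Longrightarrow> rev_jac (Id n) xs ds = ds"
  by (intro nth_equalityI)
    (simp_all add: nth_rev_jac sum_indicator_mult eval_pderiv_tm_V del: pderiv_tm.simps(1))

lemma rev_jac_sym: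
  assumes "length ds = n + m"
  shows "rev_jac (Sym m n) xs ds = drop n ds @ take n ds"
proof (rule nth_equalityI)
  fix i
  assume "i < length (rev_jac (Sym m n) xs ds)"
  then have i: "i < m + n"
    by simp
  define j where "j = (if i < m then n + i else i - m)"
  have "rev_jac (Sym m n) xs ds ! i =
      (\<Sum>k<n + m. eval_tm (env xs) (pderiv_tm i (tsem (Sym m n) (var_block 0 (m + n)) ! k)) * ds ! k)"
    using nth_rev_jac[of i "Sym m n"] i by simp
  also have "\<dots> = (\<Sum>k<n + m. (if k = j then 1 else 0) * ds ! k)"
    by (rule sum.cong) (use i in \<open>auto simp: j_def var_block_def nth_append\<close>)
  also have "\<dots> = (drop n ds @ take n ds) ! i"
    using i assms by (simp add: sum_indicator_mult j_def nth_append)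
  finally show "rev_jac (Sym m n) xs ds ! i = (drop n ds @ take n ds) ! i" .
qed (use assms in simp)

lemma rev_jac_comp:
  assumes fg: "well_typed f" "well_typed g" "cod f = dom g" and xs: "length xs = dom f"
  shows "rev_jac (Comp f g) xs ds = rev_jac f xs (rev_jac g (rsem f xs) ds)"
proof (rule nth_equalityI)
  fix i
  assume "i < length (rev_jac (Comp f g) xs ds)"
  then have i: "i < dom f"
    by simp
  let ?F = "tsem f (var_block 0 (dom f))" and ?G = "tsem g (var_block 0 (dom g))"
    and ?Y = "rsem f xs"
  define A where "A k = eval_tm (env xs) (pderiv_tm i (?F ! k))" for k
  define E where "E k j = eval_tm (env ?Y) (pderiv_tm k (?G ! j))" for k j
  have len_F: "length ?F = dom g"
    using fg by simp
  have Y: "map (eval_tm (env xs)) ?F = ?Y"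
    using rsem_eq_eval_tsem[OF fg(1) xs] by simp
  have chain: "eval_tm (env xs) (pderiv_tm i (tsem g ?F ! j)) =
      (\<Sum>k<dom g. E k j * A k)" if "j < cod g" for j
    using that fg len_F tsem_eq_subst[of g ?F]
    by (simp add: eval_pderiv_subst Y A_def E_def)
  have "rev_jac (Comp f g) xs ds ! i = (\<Sum>j<cod g. (\<Sum>k<dom g. E k j * A k) * ds ! j)"
    using i by (simp add: nth_rev_jac chain)
  also have "\<dots> = (\<Sum>k<dom g. A k * (\<Sum>j<cod g. E k j * ds ! j))"
    by (simp add: sum_distrib_left sum_distrib_right mult_ac sum.swap[of _ "{..<dom g}"])
  also have "\<dots> = rev_jac f xs (rev_jac g ?Y ds) ! i"
    using i fg by (simp add: nth_rev_jac A_def E_def)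
  finally show "rev_jac (Comp f g) xs ds ! i = rev_jac f xs (rev_jac g ?Y ds) ! i" .
qed simp

lemma rev_jac_tens:
  assumes "well_typed f" "well_typed g" "length xs = dom f" "length ys = dom g"
    and "length ds = cod f" "length es = cod g"
  shows "rev_jac (Tens f g) (xs @ ys) (ds @ es) = rev_jac f xs ds @ rev_jac g ys es"
proof (rule nth_equalityI)
  fix i
  assume "i < length (rev_jac (Tens f g) (xs @ ys) (ds @ es))"
  then have i: "i < dom f + dom g"
    by simp
  let ?F = "tsem f (var_block 0 (dom f))" and ?G = "tsem g (var_block 0 (dom g))"
    and ?\<rho> = "env (xs @ ys)"
  have len: "length ?F = cod f" "length ?G = cod g"
    using assms by simp_all
  have "rev_jac (Tens f g) (xs @ ys) (ds @ es) ! i =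
      (\<Sum>j<cod f. eval_tm ?\<rho> (pderiv_tm i (subst (var_block 0 (dom f)) (?F ! j))) * ds ! j) +
      (\<Sum>j<cod g. eval_tm ?\<rho> (pderiv_tm i (subst (var_block (dom f) (dom g)) (?G ! j))) * es ! j)"
    using i assms len
    by (simp add: nth_rev_jac tsem_tens_var_block sum_lessThan_add nth_append del: csem.simps)
  also have "\<dots> = (rev_jac f xs ds @ rev_jac g ys es) ! i"
    using i assms(1,2,5,6) len
    by (simp add: eval_pderiv_subst_var_block nth_rev_jac nth_append env_append
        flip: assms(3,4))
  finally show "rev_jac (Tens f g) (xs @ ys) (ds @ es) ! i = (rev_jac f xs ds @ rev_jac g ys es) ! i" .
qed (use assms in simp)

lemma R_simps [simp]:
  assumes "well_typed f"
  shows "well_typed (R f)" "dom (R f) = dom f + cod f" "cod (R f) = dom f"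
proof -
  have "well_typed (R f) \<and> dom (R f) = dom f + cod f \<and> cod (R f) = dom f"
    using assms
  proof (induction f)
    case (Gen g)
    then show ?case by (cases g) auto
  qed auto
  then show "well_typed (R f)" "dom (R f) = dom f + cod f" "cod (R f) = dom f"
    by simp_all
qed

lemma has_type_R: "has_type f a b \<Longrightarrow> has_type (R f) (a + b) a"
  by (simp add: has_type_iff)

lemma length_eq_1D: "length xs = Suc 0 \<Longrightarrow> \<exists>x. xs = [x]"
  by (cases xs) auto

lemma length_eq_2D: "length xs = Suc (Suc 0) \<Longrightarrow> \<exists>x y. xs = [x, y]"
  by (cases xs; cases "tl xs") auto

lemma rsem_R_gen:
  "length xs = gen_dom g \<Longrightarrow> length ds = gen_cod g \<Longrightarrow>
     rsem (R (Gen g)) (xs @ ds) = rev_jac (Gen g) xs ds"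
  by (cases g)
    (auto dest!: length_eq_1D length_eq_2D simp: rev_jac_def csem_discard_n env_def numeral_2_eq_2)

theorem rsem_R:
  "well_typed f \<Longrightarrow> length xs = dom f \<Longrightarrow> length ds = cod f \<Longrightarrow>
     rsem (R f) (xs @ ds) = rev_jac f xs ds"
proof (induction f arbitrary: xs ds)
  case (Gen g)
  then show ?case
    using rsem_R_gen[of xs g ds] by simp
next
  case (Id n)
  then show ?case
    by (simp add: csem_discard_n rev_jac_id)
next
  case (Sym m n)
  then show ?case
    by (simp add: csem_discard_n rev_jac_sym)
next
  case (Comp f g)
  then have "rsem (R (Comp f g)) (xs @ ds) = rsem (R f) (xs @ rsem (R g) (rsem f xs @ ds))"
    by (simp add: csem_copy_n)
  also have "\<dots> = rev_jac (Comp f g) xs ds"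
    using Comp by (simp add: rev_jac_comp)
  finally show ?case .
next
  case (Tens f g)
  obtain xa xc where xs: "xs = xa @ xc" "length xa = dom f" "length xc = dom g"
    using Tens.prems(2) length_eq_add_conv[of xs "dom f" "dom g"] by auto
  obtain da dc where ds: "ds = da @ dc" "length da = cod f" "length dc = cod g"
    using Tens.prems(3) length_eq_add_conv[of ds "cod f" "cod g"] by auto
  have "rsem (R (Tens f g)) (xs @ ds) = rsem (R f) (xa @ da) @ rsem (R g) (xc @ dc)"
    using Tens.prems xs ds by simp
  also have "\<dots> = rev_jac (Tens f g) xs ds"
    using Tens xs ds by (simp add: rev_jac_tens)
  finally show ?case .
qed

lemma rev_jac_cong:
  assumes "has_type f a b" "has_type g a b"
    and "\<And>xs :: f2poly list. length xs = a \<Longrightarrow> rsem f xs = rsem g xs"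
  shows "rev_jac f xs ds = rev_jac g xs ds"
proof -
  have "eval_tm (env xs) (pderiv_tm i (tsem f (var_block 0 a) ! j)) =
      eval_tm (env xs) (pderiv_tm i (tsem g (var_block 0 a) ! j))" if "j < b" for i j
    using assms that by (intro eval_pderiv_tm_eq tm_eq_tsem_if_rsem_eq) (simp_all add: has_type_iff)
  then show ?thesis
    using assms by (auto simp: rev_jac_def has_type_iff intro!: sum.cong)
qed

theorem mainTheorem3:
  assumes "has_type c a b" and "has_type d a b" and "eqA a b c d"
  shows "eqA (a + b) a (R c) (R d)"
proof -
  have rsem_cd: "rsem c xs = rsem d xs" if "length xs = a" for xs :: "f2poly list"
    using eqA_sound[OF add_self_f2poly assms(3) that] .
  have "rsem (R c) zs = rsem (R d) zs" if zs: "length zs = a + b" for zs :: "f2poly list"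
  proof -
    obtain xs ds where "zs = xs @ ds" "length xs = a" "length ds = b"
      using zs length_eq_add_conv[of zs a b] by auto
    then show ?thesis
      using rsem_R[of c xs ds] rsem_R[of d xs ds] rev_jac_cong[OF assms(1,2) rsem_cd] assms(1,2)
      by (simp add: has_type_iff)
  qed
  then show ?thesis
    using eqA_complete[OF has_type_R[OF assms(1)] has_type_R[OF assms(2)]] by blast
qed

end
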